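(* Consider the single-block on-chain auction game described in the context with $n\ge 2$ (so $N=\{0,1,\dots,n\}$) and reserve price $r=0$, where bidder 0's value is $\mathrm{Uniform}[0,1]$ and bidders $1$ through $n$ have values i.i.d. with density $f$ and CDF $F$ on $[0,1]$ satisfying $\int_0^v F^{n-1}(\theta)\,d\theta\le \frac{v}{n}$ for all $v\in[0,1]$. Let $\underline{v}$ solve $$\int_0^1 F^{n-1}(\theta)\,d\theta-\int_{\underline{v}}^1 F^n(\theta)\,d\theta=\frac{n+1}{n-1}\int_0^{\underline{v}}F^{n-1}(\theta)\,d\theta.$$ Then the following strategy profile constitutes an equilibrium: (i) Bidders $1$ through $n$ bid truthfully and tip $t(v)=0$ if $v<\underline{v}$ and $t(v)=\frac12\int_{\underline{v}}^v F^{n-1}(\theta)\,d\theta$ otherwise, where $v$ is the bidder's value. (ii) Bidder 0, as a function of the observed tips $t_1,\dots,t_n$ and his value $v_0$, bribes (i.e. pays $\sum_i t_i$ to the proposer in exchange for excluding bidder $1$ through $n$'s bids) if $\sum_{i=1}^n t_i\le v_0$ and does not bribe if $\sum_{i=1}^n t_i>v_0$; moreover bidder 0 submits a truthful nonzero bid if and only if he bribes. (iii) The proposer accepts bidder 0's bribe whenever it is offered and excludes the other bids; otherwise the proposer includes all bids.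
   Context: Single-block on-chain auction game. A seller has one indivisible good; there are $n+1$ buyers $N=\{0,1,\dots,n\}$ with quasilinear utilities and independent private values ($v_0\sim F_0$, $v_1,\dots,v_n$ i.i.d. $\sim F$, supports $[0,1]$), common knowledge. The seller runs a sealed-bid second-price auction with reserve $r$ in a single block built by a single profit-maximizing proposer. Timing: buyers learn values; buyers $1,\dots,n$ simultaneously submit a private bid $b_i$ and a public tip $t_i\ge0$; buyer 0 observes the tips and $v_0$, may make the proposer a take-it-or-leave-it offer of a subset $S\subseteq\{1,\dots,n\}$ and a payment $p$ to exclude the bids in $S$, and submits his own bid $b_0$; the proposer accepts iff $p\ge\sum_{i\in S}t_i$ (then includes exactly the bids of $N\setminus S$ and receives $p$), otherwise includes all bids; the second-price auction is computed on included bids (highest included bid wins if at least $r$, paying the maximum of $r$ and the other included bids). A bidder pays his tip iff his bid is included. Solution concept: perfect Bayesian equilibrium restricted to profiles in which (a) bidders $1,\dots,n$ bid truthfully and use a common tipping function of their value, and (b) bidder 0 bids his value if, given the tips, he assigns positive probability to winning, and otherwise bids $0$ or does not bid; these are called equilibria. *)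

theory Defs
  imports "HOL-Probability.Probability"
begin

text \<open>Buyers are indexed by naturals:
  buyer 0 is the special buyer, buyers 1..n are the others; the buyer set is {0..n}.
  A value vector / tip vector / bid vector is a function nat to real (only the
  coordinates 1..n are meaningful).\<close>

type_synonym vec = "nat \<Rightarrow> real"

text \<open>An action of buyer 0: an optional take-it-or-leave-it offer (S, p) to the proposer
  (exclude the bids in S in exchange for payment p) and an optional own bid
  (None = buyer 0 does not bid).\<close>
type_synonym action0 = "(nat set \<times> real) option \<times> real option"

definition valid_action0 :: "nat \<Rightarrow> action0 \<Rightarrow> bool" where
  "valid_action0 n a = (case fst a of None \<Rightarrow> True
      | Some (S, p) \<Rightarrow> S \<subseteq> {1..n} \<and> 0 \<le> p)"

definition proposer_accepts :: "vec \<Rightarrow> nat set \<Rightarrow> real \<Rightarrow> bool" where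
  "proposer_accepts \<tau> S p \<longleftrightarrow> (\<Sum>i\<in>S. \<tau> i) \<le> p"

definition excluded :: "vec \<Rightarrow> (nat set \<times> real) option \<Rightarrow> nat set" where
  "excluded \<tau> off = (case off of None \<Rightarrow> {}
      | Some (S, p) \<Rightarrow> if proposer_accepts \<tau> S p then S else {})"

definition bribe_paid :: "vec \<Rightarrow> (nat set \<times> real) option \<Rightarrow> real" where
  "bribe_paid \<tau> off = (case off of None \<Rightarrow> 0
      | Some (S, p) \<Rightarrow> if proposer_accepts \<tau> S p then p else 0)"

text \<open>Bids included in the block (None = no included bid).  bd gives the bids of buyers
  1..n, b0 the (optional) bid of buyer 0.\<close>
definition included_bids :: "nat \<Rightarrow> vec \<Rightarrow> (nat set \<times> real) option \<Rightarrow> vec \<Rightarrow> real option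
    \<Rightarrow> nat \<Rightarrow> real option" where
  "included_bids n \<tau> off bd b0 i =
     (if i \<in> excluded \<tau> off then None
      else if i = 0 then b0 else if i \<in> {1..n} then Some (bd i) else None)"

definition spa_winners :: "nat set \<Rightarrow> real \<Rightarrow> (nat \<Rightarrow> real option) \<Rightarrow> nat set" where
  "spa_winners N r B = {i \<in> N. \<exists>b. B i = Some b \<and> r \<le> b \<and>
                         (\<forall>j\<in>N. \<forall>c. B j = Some c \<longrightarrow> c \<le> b)}"

definition spa_price :: "nat set \<Rightarrow> real \<Rightarrow> (nat \<Rightarrow> real option) \<Rightarrow> nat \<Rightarrow> real" where
  "spa_price N r B i = Max (insert r {c. \<exists>j\<in>N - {i}. B j = Some c})"

definition spa_win_share :: "nat set \<Rightarrow> real \<Rightarrow> (nat \<Rightarrow> real option) \<Rightarrow> nat \<Rightarrow> real" where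
  "spa_win_share N r B i = (if i \<in> spa_winners N r B then 1 / real (card (spa_winners N r B)) else 0)"

definition spa_util :: "nat set \<Rightarrow> real \<Rightarrow> (nat \<Rightarrow> real option) \<Rightarrow> nat \<Rightarrow> real \<Rightarrow> real" where
  "spa_util N r B i v = spa_win_share N r B i * (v - spa_price N r B i)"

definition util_i :: "nat \<Rightarrow> real \<Rightarrow> nat \<Rightarrow> vec \<Rightarrow> vec \<Rightarrow> vec \<Rightarrow> action0 \<Rightarrow> real" where
  "util_i n r i vs bd \<tau> a =
     (let B = included_bids n \<tau> (fst a) bd (snd a)
      in spa_util {0..n} r B i (vs i) - (if B i = None then 0 else \<tau> i))"

definition util_0 :: "nat \<Rightarrow> real \<Rightarrow> real \<Rightarrow> vec \<Rightarrow> vec \<Rightarrow> action0 \<Rightarrow> real" where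
  "util_0 n r v0 bd \<tau> a =
     spa_util {0..n} r (included_bids n \<tau> (fst a) bd (snd a)) 0 v0 - bribe_paid \<tau> (fst a)"

definition tipvec :: "nat \<Rightarrow> (real \<Rightarrow> real) \<Rightarrow> vec \<Rightarrow> vec" where
  "tipvec n t vs = restrict (\<lambda>j. t (vs j)) {1..n}"

abbreviation vals_meas :: "nat \<Rightarrow> real measure \<Rightarrow> vec measure" where
  "vals_meas n PF \<equiv> PiM {1..n} (\<lambda>_. PF)"

abbreviation tips_space :: "nat \<Rightarrow> vec measure" where
  "tips_space n \<equiv> PiM {1..n} (\<lambda>_. (borel :: real measure))"

abbreviation unif01 :: "real measure" where
  "unif01 \<equiv> uniform_measure lborel {0..1}"

definition EU_i :: "nat \<Rightarrow> real \<Rightarrow> real measure \<Rightarrow> (real \<Rightarrow> real) \<Rightarrow> (vec \<Rightarrow> real \<Rightarrow> action0)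
    \<Rightarrow> nat \<Rightarrow> real \<Rightarrow> real \<Rightarrow> real \<Rightarrow> real" where
  "EU_i n r PF t \<sigma>0 i v b s =
     integral\<^sup>L (unif01 \<Otimes>\<^sub>M PiM ({1..n} - {i}) (\<lambda>_. PF))
       (\<lambda>(v0, w). let vs = w(i := v); \<tau> = (tipvec n t vs)(i := s)
                  in util_i n r i vs (vs(i := b)) \<tau> (\<sigma>0 \<tau> v0))"

text \<open>Expected utility of buyer 0 (value v0, observed tips \<tau>, action a) under belief m
  about the values of buyers 1..n, who bid truthfully.\<close>
definition EU_0 :: "nat \<Rightarrow> real \<Rightarrow> vec measure \<Rightarrow> vec \<Rightarrow> real \<Rightarrow> action0 \<Rightarrow> real" where
  "EU_0 n r m \<tau> v0 a = integral\<^sup>L m (\<lambda>vs. util_0 n r v0 vs \<tau> a)"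

text \<open>Probability buyer 0 assigns (under belief m) to winning when bidding his value v0
  (with offer off): his bid is at least r and strictly above every other included bid
  (ties are a null event on path and are not counted as wins here).\<close>
definition win_prob_0 :: "nat \<Rightarrow> real \<Rightarrow> vec measure \<Rightarrow> vec \<Rightarrow> real \<Rightarrow> (nat set \<times> real) option \<Rightarrow> real" where
  "win_prob_0 n r m \<tau> v0 off =
     measure m {vs \<in> space m. r \<le> v0 \<and>
        (\<forall>j\<in>{1..n}. \<forall>c. included_bids n \<tau> off vs (Some v0) j = Some c \<longrightarrow> c < v0)}"

text \<open>Belief system of buyer 0: for every tip vector a probability measure on value vectors
  of buyers 1..n (supported on [0,1]^n), measurable in the tips, and consistent with Bayes'
  rule: it is a regular conditional distribution of the values given the tips.\<close>
definition consistent_beliefs :: "nat \<Rightarrow> real measure \<Rightarrow> (real \<Rightarrow> real) \<Rightarrow> (vec \<Rightarrow> vec measure) \<Rightarrow> bool" where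
  "consistent_beliefs n PF t \<mu> \<longleftrightarrow>
     \<mu> \<in> tips_space n \<rightarrow>\<^sub>M prob_algebra (vals_meas n PF) \<and>
     (\<forall>\<tau>. AE vs in \<mu> \<tau>. \<forall>j\<in>{1..n}. vs j \<in> {0..1}) \<and>
     (\<forall>A\<in>sets (tips_space n). \<forall>B\<in>sets (vals_meas n PF).
        emeasure (vals_meas n PF) ({vs \<in> space (vals_meas n PF). tipvec n t vs \<in> A} \<inter> B) =
        (\<integral>\<^sup>+ vs. indicator A (tipvec n t vs) * emeasure (\<mu> (tipvec n t vs)) B \<partial>vals_meas n PF))"

definition equilibrium :: "nat \<Rightarrow> real \<Rightarrow> real measure \<Rightarrow> (real \<Rightarrow> real) \<Rightarrow> (vec \<Rightarrow> real \<Rightarrow> action0) \<Rightarrow> bool" where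
  "equilibrium n r PF t \<sigma>0 \<longleftrightarrow>
     (\<forall>v\<in>{0..1}. 0 \<le> t v) \<and>
     (\<exists>\<mu>. consistent_beliefs n PF t \<mu> \<and>
       (\<forall>\<tau>\<in>space (tips_space n). (\<forall>j\<in>{1..n}. 0 \<le> \<tau> j) \<longrightarrow> (\<forall>v0\<in>{0..1}.
          valid_action0 n (\<sigma>0 \<tau> v0) \<and>
          (\<forall>a. valid_action0 n a \<longrightarrow> EU_0 n r (\<mu> \<tau>) \<tau> v0 a \<le> EU_0 n r (\<mu> \<tau>) \<tau> v0 (\<sigma>0 \<tau> v0)) \<and>
          (if win_prob_0 n r (\<mu> \<tau>) \<tau> v0 (fst (\<sigma>0 \<tau> v0)) > 0 then snd (\<sigma>0 \<tau> v0) = Some v0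
           else snd (\<sigma>0 \<tau> v0) \<in> {None, Some 0}))) \<and>
       (\<forall>i\<in>{1..n}. \<forall>v\<in>{0..1}. \<forall>b s. 0 \<le> s \<longrightarrow>
          EU_i n r PF t \<sigma>0 i v b s \<le> EU_i n r PF t \<sigma>0 i v v (t v)))"

definition bribe_strategy :: "nat \<Rightarrow> (vec \<Rightarrow> real \<Rightarrow> bool) \<Rightarrow> vec \<Rightarrow> real \<Rightarrow> action0" where
  "bribe_strategy n nb \<tau> v0 =
     (if (\<Sum>j\<in>{1..n}. \<tau> j) \<le> v0 then (Some ({1..n}, \<Sum>j\<in>{1..n}. \<tau> j), Some v0)
      else (None, if nb \<tau> v0 then Some 0 else None))"

end

theory Submission
  imports Defs
begin

text \<open>The tip t is zero below vl and strictly increasing above it, and the hypothesis on the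
  integrals of F^(n-1) gives t(v) \<le> v/(2n). Buyer 0 believes that a bidder tipping 0 has a value
  drawn from F conditioned on [0, vl] and reads the value of a positive tipper off the inverse of
  t. This belief is Bayes-consistent because redrawing all values below vl changes neither the
  distribution of the values nor the tips. Under it the tips of the bidders left in total at most
  half of their highest value, so buyer 0 does best by excluding everybody for the sum of the tips
  when that sum is at most v0, and otherwise cannot win at all.

  A bidder of value v who tips s is therefore excluded with probability min 1 (s + S), S being the
  other bidders' total tip, and otherwise earns the second-price surplus G = (v - max others)^+
  minus s. His expected payoff is at most E[(S + s')(G - s')] with s' = min s (1/2), a concave
  quadratic in s' with vertex (E G - E S)/2. Here E G is the integral of F^(n-1) over [0, v] and,
  by the defining equation of vl, E S is its integral over [0, vl]; so the maximum over s' \<ge> 0 is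
  at s' = t(v), where the bound is attained.\<close>

section \<open>Second-price auctions\<close>

lemma spa_winners_subset: "spa_winners N r B \<subseteq> N"
  unfolding spa_winners_def by auto

lemma spa_win_share_bounds:
  assumes "finite N"
  shows "0 \<le> spa_win_share N r B i" and "spa_win_share N r B i \<le> 1"
proof -
  show "0 \<le> spa_win_share N r B i"
    unfolding spa_win_share_def by auto
  have "0 < card (spa_winners N r B)" if "i \<in> spa_winners N r B"
    using that assms spa_winners_subset[of N r B] by (metis card_gt_0_iff empty_iff finite_subset)
  then show "spa_win_share N r B i \<le> 1"
    unfolding spa_win_share_def by auto
qed

lemma finite_other_bids: "finite N \<Longrightarrow> finite {c. \<exists>j\<in>N - {i}. B j = Some c}"
  by (rule finite_subset[of _ "(\<lambda>j. the (B j)) ` N"]) force+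

lemma spa_price_ge_reserve: "finite N \<Longrightarrow> r \<le> spa_price N r B i"
  using finite_other_bids[of N i B] unfolding spa_price_def by (intro Max_ge) auto

lemma spa_price_ge_bid:
  "finite N \<Longrightarrow> j \<in> N \<Longrightarrow> j \<noteq> i \<Longrightarrow> B j = Some c \<Longrightarrow> c \<le> spa_price N r B i"
  using finite_other_bids[of N i B] unfolding spa_price_def by (intro Max_ge) auto

lemma spa_price_le:
  assumes "finite N" "r \<le> b" "\<forall>j\<in>N - {i}. \<forall>c. B j = Some c \<longrightarrow> c \<le> b"
  shows "spa_price N r B i \<le> b"
  using finite_other_bids[of N i B] assms unfolding spa_price_def by (intro Max.boundedI) auto

lemma spa_util_le_surplus: "finite N \<Longrightarrow> spa_util N r B i v \<le> max 0 (v - spa_price N r B i)"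
  unfolding spa_util_def using spa_win_share_bounds[of N r B i]
  by (cases "v \<le> spa_price N r B i") (auto simp: mult_nonneg_nonpos mult_left_le_one_le)

lemma spa_util_le_reserve: "finite N \<Longrightarrow> spa_util N r B i v \<le> max 0 (v - r)"
  using spa_util_le_surplus[of N r B i v] spa_price_ge_reserve[of N r B i] by auto

lemma spa_util_le_other_bid:
  "finite N \<Longrightarrow> j \<in> N \<Longrightarrow> j \<noteq> i \<Longrightarrow> B j = Some c \<Longrightarrow> spa_util N r B i v \<le> max 0 (v - c)"
  using spa_util_le_surplus[of N r B i v] spa_price_ge_bid[of N j i B c r] by auto

lemma spa_util_no_bid: "B i = None \<Longrightarrow> spa_util N r B i v = 0"
  unfolding spa_util_def spa_win_share_def spa_winners_def by auto

lemma spa_winners_eq_singleton: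
  assumes N: "finite N" "i \<in> N" and bid: "B i = Some b" and price: "spa_price N r B i < b"
  shows "spa_winners N r B = {i}"
proof -
  have others: "c < b" if "j \<in> N" "j \<noteq> i" "B j = Some c" for j c
    using spa_price_ge_bid[of N j i B c r] N(1) that price by simp
  have "r < b"
    using spa_price_ge_reserve[OF N(1)] price by (rule le_less_trans)
  then have "i \<in> spa_winners N r B"
    unfolding spa_winners_def using N bid others by (fastforce intro: less_imp_le)
  moreover have "j = i" if "j \<in> spa_winners N r B" for j
  proof (rule ccontr)
    assume "j \<noteq> i"
    obtain c where "j \<in> N" "B j = Some c" "\<forall>k\<in>N. \<forall>d. B k = Some d \<longrightarrow> d \<le> c"
      using \<open>j \<in> spa_winners N r B\<close> unfolding spa_winners_def by blast
    then have "b \<le> c" "c < b"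
      using N(2) bid others \<open>j \<noteq> i\<close> by auto
    then show False
      by simp
  qed
  ultimately show ?thesis by blast
qed

lemma spa_util_truthful:
  assumes N: "finite N" "i \<in> N" and bid: "B i = Some v" and "r \<le> v"
  shows "spa_util N r B i v = max 0 (v - spa_price N r B i)"
proof (cases "spa_price N r B i < v")
  case True
  then show ?thesis
    unfolding spa_util_def spa_win_share_def spa_winners_eq_singleton[OF N bid True] by simp
next
  case False
  moreover have "spa_price N r B i \<le> v" if "i \<in> spa_winners N r B"
    using that N bid \<open>r \<le> v\<close> unfolding spa_winners_def by (intro spa_price_le) auto
  ultimately show ?thesis
    unfolding spa_util_def spa_win_share_def by auto
qed

lemma spa_util_nonneg:
  assumes "finite N" "B i = Some b" "b \<le> v"
  shows "0 \<le> spa_util N r B i v"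
proof (cases "i \<in> spa_winners N r B")
  case True
  then have "spa_price N r B i \<le> b"
    using assms unfolding spa_winners_def by (intro spa_price_le) auto
  then show ?thesis
    unfolding spa_util_def using spa_win_share_bounds[OF assms(1), of r B i] assms by auto
qed (simp add: spa_util_def spa_win_share_def)

section \<open>The bribe strategy of buyer 0\<close>

text \<open>Values equal to 1 are exempt because buyer 0 reads any tip beyond the largest possible tip
  as value 1.\<close>
definition small_tips :: "nat \<Rightarrow> vec \<Rightarrow> vec \<Rightarrow> bool" where
  "small_tips n \<tau> vs \<longleftrightarrow> (\<forall>j\<in>{1..n}. vs j \<in> {0..1} \<and> (vs j < 1 \<longrightarrow> 2 * real n * \<tau> j \<le> vs j))"

lemma sum_tips_le_half:
  assumes "R \<subseteq> {1..n}" "0 \<le> m" "\<forall>j\<in>R. 2 * real n * \<tau> j \<le> m"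
  shows "(\<Sum>j\<in>R. \<tau> j) \<le> m / 2"
proof -
  have "(\<Sum>j\<in>R. \<tau> j) \<le> (\<Sum>j\<in>R. m / (2 * real n))"
    using assms by (intro sum_mono) (auto simp: field_simps)
  also have "\<dots> = real (card R) * m / (2 * real n)"
    by simp
  also have "\<dots> \<le> real n * m / (2 * real n)"
    using card_mono[OF finite_atLeastAtMost assms(1)] assms(2)
    by (intro divide_right_mono mult_right_mono) auto
  also have "\<dots> \<le> m / 2"
    using assms(2) by (cases "n = 0") auto
  finally show ?thesis .
qed

lemma valid_bribe_strategy:
  "\<forall>j\<in>{1..n}. 0 \<le> \<tau> j \<Longrightarrow> valid_action0 n (bribe_strategy n nb \<tau> v0)"
  unfolding valid_action0_def bribe_strategy_def by (auto intro: sum_nonneg)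

lemma bribe_strategy_accepted:
  "fst (bribe_strategy n nb \<tau> v0) = Some (S, p) \<Longrightarrow> proposer_accepts \<tau> S p"
  unfolding bribe_strategy_def proposer_accepts_def by (auto split: if_splits)

lemma included_bids_bribe:
  assumes "(\<Sum>j\<in>{1..n}. \<tau> j) \<le> v0"
  shows "included_bids n \<tau> (fst (bribe_strategy n nb \<tau> v0)) bd b0 j = (if j = 0 then b0 else None)"
  using assms
  unfolding bribe_strategy_def included_bids_def excluded_def proposer_accepts_def by auto

lemma included_bids_no_offer:
  "included_bids n \<tau> None bd b0 j = (if j = 0 then b0 else if j \<in> {1..n} then Some (bd j) else None)"
  unfolding included_bids_def excluded_def by simp

lemma util_0_bribe:
  assumes "(\<Sum>j\<in>{1..n}. \<tau> j) \<le> v0" "0 \<le> v0"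
  shows "util_0 n 0 v0 vs \<tau> (bribe_strategy n nb \<tau> v0) = v0 - (\<Sum>j\<in>{1..n}. \<tau> j)"
proof -
  let ?B = "included_bids n \<tau> (fst (bribe_strategy n nb \<tau> v0)) vs (Some v0)"
  have "spa_price {0..n} 0 ?B 0 = 0"
    unfolding spa_price_def included_bids_bribe[OF assms(1)] by simp
  then have "spa_util {0..n} 0 ?B 0 v0 = v0"
    using spa_util_truthful[of "{0..n}" 0 ?B v0 0] included_bids_bribe[OF assms(1)] assms(2)
    by simp
  then show ?thesis
    using assms unfolding util_0_def bribe_paid_def by (simp add: bribe_strategy_def proposer_accepts_def)
qed

lemma util_0_no_bribe_nonneg:
  assumes "\<not> (\<Sum>j\<in>{1..n}. \<tau> j) \<le> v0" "0 \<le> v0"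
  shows "0 \<le> util_0 n 0 v0 vs \<tau> (bribe_strategy n nb \<tau> v0)"
proof -
  let ?b0 = "if nb \<tau> v0 then Some 0 else None"
  let ?B = "included_bids n \<tau> None vs ?b0"
  have "0 \<le> spa_util {0..n} 0 ?B 0 v0"
    using assms(2) spa_util_nonneg[of "{0..n}" ?B 0 0 v0] spa_util_no_bid[of ?B 0]
    by (cases "nb \<tau> v0") (auto simp: included_bids_no_offer)
  then show ?thesis
    using assms unfolding util_0_def bribe_strategy_def bribe_paid_def by simp
qed

lemma excluded_subset: "valid_action0 n a \<Longrightarrow> excluded \<tau> (fst a) \<subseteq> {1..n}"
  unfolding valid_action0_def excluded_def by (auto split: option.splits prod.splits)

lemma sum_excluded_le_bribe_paid: "(\<Sum>j\<in>excluded \<tau> off. \<tau> j) \<le> bribe_paid \<tau> off"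
  unfolding excluded_def bribe_paid_def proposer_accepts_def by (auto split: option.splits prod.splits)

text \<open>If some bidder of value m < v0 is left in, then buyer 0 gains at most v0 - m, while the
  tips of all bidders left in total at most m/2.\<close>
lemma spa_util_buyer_0_le:
  fixes n :: nat and \<tau> vs :: vec and off :: "(nat set \<times> real) option"
  defines "R \<equiv> {1..n} - excluded \<tau> off"
  assumes small: "small_tips n \<tau> vs" and v0: "0 \<le> v0" "v0 \<le> 1"
  shows "spa_util {0..n} 0 (included_bids n \<tau> off vs b0) 0 v0 \<le> 0
       \<or> spa_util {0..n} 0 (included_bids n \<tau> off vs b0) 0 v0 \<le> v0 - sum \<tau> R"
    (is "?u \<le> 0 \<or> ?u \<le> _")
proof (cases "R = {}")
  case True
  then show ?thesis
    using spa_util_le_reserve[of "{0..n}" 0 _ 0 v0] v0 by simp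
next
  case False
  define m where "m = Max (vs ` R)"
  have "finite R"
    unfolding R_def by simp
  then have "m \<in> vs ` R"
    unfolding m_def using False by (intro Max_in) auto
  then obtain k where k: "k \<in> R" "vs k = m"
    by auto
  have below_m: "vs j \<le> m" if "j \<in> R" for j
    unfolding m_def using \<open>finite R\<close> that by simp
  have "included_bids n \<tau> off vs b0 k = Some m"
    using k unfolding R_def included_bids_def by auto
  then have u_le: "?u \<le> max 0 (v0 - m)"
    using k(1) unfolding R_def by (intro spa_util_le_other_bid) auto
  show ?thesis
  proof (cases "v0 \<le> m")
    case True
    then show ?thesis
      using u_le by simp
  next
    case False
    have "0 \<le> m"
      using small k unfolding small_tips_def R_def by auto
    moreover have "2 * real n * \<tau> j \<le> m" if "j \<in> R" for j
      using small below_m[OF that] that False v0(2) unfolding small_tips_def R_def by force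
    ultimately have "sum \<tau> R \<le> m / 2"
      unfolding R_def by (intro sum_tips_le_half) auto
    then show ?thesis
      using u_le False \<open>0 \<le> m\<close> by simp
  qed
qed

lemma util_0_le_bribe_surplus:
  assumes tips: "\<forall>j\<in>{1..n}. 0 \<le> \<tau> j" and small: "small_tips n \<tau> vs"
    and v0: "0 \<le> v0" "v0 \<le> 1" and a: "valid_action0 n a"
  shows "util_0 n 0 v0 vs \<tau> a \<le> max 0 (v0 - (\<Sum>j\<in>{1..n}. \<tau> j))"
proof -
  define E where "E = excluded \<tau> (fst a)"
  have "E \<subseteq> {1..n}"
    unfolding E_def using a by (rule excluded_subset)
  then have "(\<Sum>j\<in>{1..n}. \<tau> j) = sum \<tau> E + sum \<tau> ({1..n} - E)"
    by (metis add.commute finite_atLeastAtMost sum.subset_diff)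
  moreover have "0 \<le> sum \<tau> E"
    using tips \<open>E \<subseteq> {1..n}\<close> by (intro sum_nonneg) auto
  moreover have "util_0 n 0 v0 vs \<tau> a \<le> spa_util {0..n} 0 (included_bids n \<tau> (fst a) vs (snd a)) 0 v0 - sum \<tau> E"
    using sum_excluded_le_bribe_paid[of \<tau> "fst a"] unfolding util_0_def E_def by simp
  ultimately show ?thesis
    using spa_util_buyer_0_le[OF small v0, of "fst a" "snd a"] unfolding E_def by linarith
qed

lemma exists_value_above_if_no_bribe:
  assumes small: "small_tips n \<tau> vs" and v0: "0 \<le> v0" "v0 \<le> 1"
    and no_bribe: "\<not> (\<Sum>j\<in>{1..n}. \<tau> j) \<le> v0"
  shows "\<exists>j\<in>{1..n}. v0 \<le> vs j"
proof (rule ccontr)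
  assume "\<not> ?thesis"
  then have "\<forall>j\<in>{1..n}. 2 * real n * \<tau> j \<le> v0"
    using small v0 unfolding small_tips_def by force
  then have "(\<Sum>j\<in>{1..n}. \<tau> j) \<le> v0 / 2"
    using v0 by (intro sum_tips_le_half) auto
  then show False
    using no_bribe v0 by simp
qed

lemma sum_deviating_tips:
  "i \<in> {1..n} \<Longrightarrow> (\<Sum>j\<in>{1..n}. ((tipvec n t vs)(i := s)) j) = s + (\<Sum>j\<in>{1..n} - {i}. t (vs j))"
  by (simp add: sum.remove tipvec_def)

text \<open>Without an offer buyer 0 bids 0 or nothing, which makes no difference under reserve 0;
  this is why the choice nb never matters.\<close>
lemma spa_price_no_offer:
  assumes "i \<in> {1..n}" "b0 \<in> {None, Some 0}"
  shows "spa_price {0..n} 0 (included_bids n \<tau> None bd b0) i = Max (insert 0 (bd ` ({1..n} - {i})))"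
proof -
  have "{0..n} - {i} = insert 0 ({1..n} - {i})"
    using assms(1) by auto
  then have "{c. \<exists>j\<in>{0..n} - {i}. included_bids n \<tau> None bd b0 j = Some c}
      = {c. b0 = Some c} \<union> bd ` ({1..n} - {i})"
    by (auto simp: included_bids_no_offer)
  then show ?thesis
    unfolding spa_price_def using assms(2) by auto
qed

lemma util_i_bribe_strategy:
  fixes n i :: nat and vs bd \<tau> :: vec
  defines "T \<equiv> \<Sum>j\<in>{1..n}. \<tau> j" and "p \<equiv> Max (insert 0 (bd ` ({1..n} - {i})))"
  assumes i: "i \<in> {1..n}"
  shows "util_i n 0 i vs bd \<tau> (bribe_strategy n nb \<tau> v0)
           \<le> (if T \<le> v0 then 0 else max 0 (vs i - p) - \<tau> i)"
    and "bd i = vs i \<Longrightarrow> 0 \<le> vs i \<Longrightarrow> util_i n 0 i vs bd \<tau> (bribe_strategy n nb \<tau> v0)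
           = (if T \<le> v0 then 0 else max 0 (vs i - p) - \<tau> i)"
proof -
  let ?B = "included_bids n \<tau> None bd (if nb \<tau> v0 then Some 0 else None)"
  have price: "spa_price {0..n} 0 ?B i = p"
    unfolding p_def using i by (intro spa_price_no_offer) auto
  have util: "util_i n 0 i vs bd \<tau> (bribe_strategy n nb \<tau> v0)
      = (if T \<le> v0 then 0 else spa_util {0..n} 0 ?B i (vs i) - \<tau> i)"
  proof (cases "T \<le> v0")
    case True
    then have "included_bids n \<tau> (fst (bribe_strategy n nb \<tau> v0)) bd (snd (bribe_strategy n nb \<tau> v0)) i = None"
      using i unfolding T_def by (simp add: included_bids_bribe)
    then show ?thesis
      using True unfolding util_i_def by (simp add: spa_util_no_bid)
  next
    case False
    then show ?thesis
      using i unfolding util_i_def T_def by (simp add: bribe_strategy_def included_bids_no_offer)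
  qed
  show "util_i n 0 i vs bd \<tau> (bribe_strategy n nb \<tau> v0) \<le> (if T \<le> v0 then 0 else max 0 (vs i - p) - \<tau> i)"
    unfolding util using spa_util_le_surplus[of "{0..n}" 0 ?B i "vs i"] price by simp
  show "util_i n 0 i vs bd \<tau> (bribe_strategy n nb \<tau> v0) = (if T \<le> v0 then 0 else max 0 (vs i - p) - \<tau> i)"
    if "bd i = vs i" "0 \<le> vs i"
    unfolding util using spa_util_truthful[of "{0..n}" i ?B "vs i" 0] price that i
    by (simp add: included_bids_no_offer)
qed

definition highest :: "nat set \<Rightarrow> vec \<Rightarrow> real" where
  "highest K w = Max (insert 0 (w ` K))"

lemma highest_nonneg: "finite K \<Longrightarrow> 0 \<le> highest K w"
  unfolding highest_def by simp

lemma highest_le_iff: "finite K \<Longrightarrow> highest K w \<le> \<theta> \<longleftrightarrow> 0 \<le> \<theta> \<and> (\<forall>j\<in>K. w j \<le> \<theta>)"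
  unfolding highest_def by simp

lemma ennreal_surplus_eq_nn_integral:
  assumes "finite K"
  shows "ennreal (max 0 (v - highest K w))
           = (\<integral>\<^sup>+ \<theta>. indicator {0..v} \<theta> * indicator {\<theta>. \<forall>j\<in>K. w j \<le> \<theta>} \<theta> \<partial>lborel)"
proof -
  have "{0..v} \<inter> {\<theta>. \<forall>j\<in>K. w j \<le> \<theta>} = {highest K w..v}"
    using highest_le_iff[OF assms, of w] by auto
  then have "(\<integral>\<^sup>+ \<theta>. indicator {0..v} \<theta> * indicator {\<theta>. \<forall>j\<in>K. w j \<le> \<theta>} \<theta> \<partial>lborel)
      = emeasure lborel {highest K w..v}"
    by (subst nn_integral_indicator[symmetric]) (auto simp: indicator_inter_arith[symmetric])
  then show ?thesis
    by (cases "highest K w \<le> v") auto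
qed

section \<open>Atomless distributions on the unit interval\<close>

locale unit_interval_distribution = real_distribution PF for PF :: "real measure" +
  fixes F :: "real \<Rightarrow> real"
  assumes atomless: "\<And>x. measure PF {x} = 0"
    and measure_below_0: "measure PF {..<0} = 0"
    and measure_above_1: "measure PF {1<..} = 0"
    and F_eq: "\<And>x. F x = measure PF {..x}"
    and F_pos: "\<And>x. 0 < x \<Longrightarrow> x \<le> 1 \<Longrightarrow> 0 < F x"
begin

lemma F_cdf: "F = cdf PF"
  by (auto simp: F_eq cdf_def)

lemma F_mono: "x \<le> y \<Longrightarrow> F x \<le> F y"
  unfolding F_cdf by (rule cdf_nondecreasing)

lemma F_nonneg: "0 \<le> F x"
  unfolding F_cdf by (rule cdf_nonneg)

lemma F_le_1: "F x \<le> 1"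
  unfolding F_cdf by (rule cdf_bounded_prob)

lemma continuous_on_F: "continuous_on A F"
  unfolding F_cdf using isCont_cdf atomless continuous_at_imp_continuous_on by blast

lemma measure_atLeastAtMost_0:
  assumes "0 \<le> x" shows "measure PF {0..x} = F x"
proof -
  have "{0..x} = {..x} - {..<0}" "{..<0} \<subseteq> {..x}"
    using assms by auto
  then show ?thesis
    using finite_measure_Diff[of "{..x}" "{..<0}"] measure_below_0 by (simp add: F_eq)
qed

lemma F_eq_1:
  assumes "1 \<le> x" shows "F x = 1"
proof -
  have "1 - F x = measure PF (UNIV - {..x})"
    using prob_compl[of "{..x}"] by (simp add: F_eq)
  also have "\<dots> \<le> measure PF {1<..}"
    using assms by (intro finite_measure_mono) auto
  finally show ?thesis
    using measure_above_1 F_le_1[of x] by simp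
qed

lemma F_0: "F 0 = 0"
  using measure_atLeastAtMost_0[of 0] atomless[of 0] by simp

lemma emeasure_atLeast: "emeasure PF {\<theta>..} = ennreal (1 - F \<theta>)"
proof -
  have "UNIV - {\<theta>..} = {..\<theta>} - {\<theta>}"
    by auto
  then have "measure PF {\<theta>..} = 1 - (F \<theta> - measure PF {\<theta>})"
    using prob_compl[of "{\<theta>..}"] finite_measure_Diff[of "{..\<theta>}" "{\<theta>}"] by (simp add: F_eq)
  then show ?thesis
    using atomless[of \<theta>] by (simp add: emeasure_eq_measure)
qed

lemma AE_in_unit_interval: "AE x in PF. x \<in> {0..1}"
  using measure_atLeastAtMost_0[of 1] F_eq_1[of 1] by (intro AE_prob_1) auto

lemma AE_PiM_in_unit_interval:
  "finite K \<Longrightarrow> AE w in PiM K (\<lambda>_. PF). \<forall>j\<in>K. w j \<in> {0..1}"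
  by (intro eventually_ball_finite ballI AE_PiM_component[where M="\<lambda>_. PF"]
      prob_space_axioms AE_in_unit_interval) auto

lemma highest_measurable[measurable]:
  assumes "finite K" shows "highest K \<in> borel_measurable (PiM K (\<lambda>_. PF))"
proof (cases "K = {}")
  case False
  then have "highest K = (\<lambda>w. max 0 (Max ((\<lambda>j. w j) ` K)))"
    using assms by (auto simp: highest_def fun_eq_iff)
  then show ?thesis
    using assms by (simp only:) measurable
qed (simp add: highest_def[abs_def])

lemma integral_PiM_component:
  fixes f :: "real \<Rightarrow> real"
  assumes "j \<in> K" "finite K" "f \<in> borel_measurable borel" "integrable PF f"
  shows "integrable (PiM K (\<lambda>_. PF)) (\<lambda>w. f (w j))"
    and "integral\<^sup>L (PiM K (\<lambda>_. PF)) (\<lambda>w. f (w j)) = integral\<^sup>L PF f"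
proof -
  have component: "(\<lambda>w. w j) \<in> PiM K (\<lambda>_. PF) \<rightarrow>\<^sub>M PF"
    using assms(1) by measurable
  have distr: "distr (PiM K (\<lambda>_. PF)) PF (\<lambda>w. w j) = PF"
    using prob_space_axioms assms(1) by (intro distr_PiM_component)
  show "integrable (PiM K (\<lambda>_. PF)) (\<lambda>w. f (w j))"
    using integrable_distr_eq[OF component, of f] assms(3,4) distr by simp
  show "integral\<^sup>L (PiM K (\<lambda>_. PF)) (\<lambda>w. f (w j)) = integral\<^sup>L PF f"
    using integral_distr[OF component, of f] assms(3) distr by simp
qed

lemma emeasure_PiM_all_le:
  assumes "finite K"
  shows "emeasure (PiM K (\<lambda>_. PF)) {w \<in> space (PiM K (\<lambda>_. PF)). \<forall>j\<in>K. w j \<le> \<theta>}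
           = ennreal (F \<theta> ^ card K)"
proof -
  interpret P: product_prob_space "\<lambda>_. PF" K
    by unfold_locales
  have "emeasure (PiM K (\<lambda>_. PF)) {w \<in> space (PiM K (\<lambda>_. PF)). \<forall>j\<in>K. w j \<in> {..\<theta>}}
      = (\<Prod>j\<in>K. emeasure PF {..\<theta>})"
    using assms by (intro P.emeasure_PiM_Collect) auto
  also have "\<dots> = (\<Prod>j\<in>K. ennreal (F \<theta>))"
    by (simp add: F_eq emeasure_eq_measure)
  finally show ?thesis
    by (simp add: ennreal_power F_nonneg)
qed

lemma nn_integral_surplus:
  assumes K: "finite K" and "0 \<le> v"
  shows "(\<integral>\<^sup>+ w. ennreal (max 0 (v - highest K w)) \<partial>PiM K (\<lambda>_. PF))
           = ennreal (integral {0..v} (\<lambda>\<theta>. F \<theta> ^ card K))"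
proof -
  interpret P: product_prob_space "\<lambda>_. PF" K
    by unfold_locales
  interpret PS: pair_sigma_finite "PiM K (\<lambda>_. PF)" lborel
    by (intro pair_sigma_finite.intro P.sigma_finite_measure_axioms lborel.sigma_finite_measure_axioms)
  have "(\<integral>\<^sup>+ w. ennreal (max 0 (v - highest K w)) \<partial>PiM K (\<lambda>_. PF))
      = (\<integral>\<^sup>+ w. \<integral>\<^sup>+ \<theta>. indicator {0..v} \<theta> * indicator {\<theta>. \<forall>j\<in>K. w j \<le> \<theta>} \<theta> \<partial>lborel \<partial>PiM K (\<lambda>_. PF))"
    by (intro nn_integral_cong ennreal_surplus_eq_nn_integral[OF K])
  also have "\<dots> = (\<integral>\<^sup>+ \<theta>. \<integral>\<^sup>+ w. indicator {0..v} \<theta> * indicator {\<theta>. \<forall>j\<in>K. w j \<le> \<theta>} \<theta> \<partial>PiM K (\<lambda>_. PF) \<partial>lborel)"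
    by (rule PS.Fubini'[symmetric]) (use K in measurable)
  also have "\<dots> = (\<integral>\<^sup>+ \<theta>. ennreal (indicator {0..v} \<theta> * F \<theta> ^ card K) \<partial>lborel)"
  proof (intro nn_integral_cong)
    fix \<theta> :: real
    have "(\<integral>\<^sup>+ w. indicator {0..v} \<theta> * indicator {\<theta>. \<forall>j\<in>K. w j \<le> \<theta>} \<theta> \<partial>PiM K (\<lambda>_. PF))
        = (\<integral>\<^sup>+ w. indicator {0..v} \<theta> *
        indicator {w \<in> space (PiM K (\<lambda>_. PF)). \<forall>j\<in>K. w j \<le> \<theta>} w \<partial>PiM K (\<lambda>_. PF))"
      by (intro nn_integral_cong) (auto simp: indicator_def)
    also have "\<dots> = indicator {0..v} \<theta> * ennreal (F \<theta> ^ card K)"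
      using K by (subst nn_integral_cmult_indicator) (measurable, simp add: emeasure_PiM_all_le)
    finally show "(\<integral>\<^sup>+ w. indicator {0..v} \<theta> * indicator {\<theta>. \<forall>j\<in>K. w j \<le> \<theta>} \<theta> \<partial>PiM K (\<lambda>_. PF))
        = ennreal (indicator {0..v} \<theta> * F \<theta> ^ card K)"
      by (simp add: indicator_def)
  qed
  also have "\<dots> = ennreal (integral {0..v} (\<lambda>\<theta>. F \<theta> ^ card K))"
    by (intro nn_integral_has_integral_lebesgue integrable_integral integrable_continuous_interval
        continuous_intros continuous_on_F) (simp add: F_nonneg)
  finally show ?thesis .
qed

lemma integral_surplus:
  assumes "finite K" "0 \<le> v"
  shows "(\<integral>w. max 0 (v - highest K w) \<partial>PiM K (\<lambda>_. PF)) = integral {0..v} (\<lambda>\<theta>. F \<theta> ^ card K)"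
proof -
  have "(\<integral>w. max 0 (v - highest K w) \<partial>PiM K (\<lambda>_. PF))
      = enn2real (\<integral>\<^sup>+ w. ennreal (max 0 (v - highest K w)) \<partial>PiM K (\<lambda>_. PF))"
    by (rule integral_eq_nn_integral) (use assms in auto)
  also have "\<dots> = integral {0..v} (\<lambda>\<theta>. F \<theta> ^ card K)"
    unfolding nn_integral_surplus[OF assms]
    by (intro enn2real_ennreal integral_nonneg integrable_continuous_interval continuous_intros
        continuous_on_F) (auto simp: F_nonneg)
  finally show ?thesis .
qed

lemma nn_integral_const_above:
  assumes "0 \<le> c"
  shows "(\<integral>\<^sup>+ x. ennreal (if a \<le> \<theta> \<and> \<theta> \<le> x then c else 0) \<partial>PF) = ennreal (indicator {a..1} \<theta> * (c * (1 - F \<theta>)))"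
proof -
  have "(\<integral>\<^sup>+ x. ennreal (if a \<le> \<theta> \<and> \<theta> \<le> x then c else 0) \<partial>PF)
      = (\<integral>\<^sup>+ x. ennreal (if a \<le> \<theta> then c else 0) * indicator {\<theta>..} x \<partial>PF)"
    by (intro nn_integral_cong) (auto simp: indicator_def)
  also have "\<dots> = ennreal (if a \<le> \<theta> then c else 0) * emeasure PF {\<theta>..}"
    by (rule nn_integral_cmult_indicator) auto
  also have "\<dots> = ennreal (indicator {a..1} \<theta> * (c * (1 - F \<theta>)))"
    using F_eq_1[of \<theta>] F_le_1[of \<theta>] assms
    by (auto simp: emeasure_atLeast indicator_def ennreal_mult[symmetric])
  finally show ?thesis .
qed

lemma nn_integral_indefinite_integral:
  fixes g :: "real \<Rightarrow> real"
  assumes g: "continuous_on UNIV g" "\<And>\<theta>. 0 \<le> g \<theta>"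
  shows "(\<integral>\<^sup>+ x. ennreal (integral {a..x} g) \<partial>PF) = ennreal (integral {a..1} (\<lambda>\<theta>. g \<theta> * (1 - F \<theta>)))"
proof -
  interpret PS: pair_sigma_finite PF lborel
    by (intro pair_sigma_finite.intro sigma_finite_measure_axioms lborel.sigma_finite_measure_axioms)
  have [measurable]: "g \<in> borel_measurable borel"
    using g(1) by (rule borel_measurable_continuous_onI)
  have integrable: "h integrable_on {x..y}" if "continuous_on UNIV h" for h :: "real \<Rightarrow> real" and x y
    using that by (rule integrable_continuous_interval[OF continuous_on_subset]) auto
  define between where "between x \<theta> = ennreal (if a \<le> \<theta> \<and> \<theta> \<le> x then g \<theta> else 0)" for x \<theta>
  have "ennreal (integral {a..x} g) = (\<integral>\<^sup>+ \<theta>. between x \<theta> \<partial>lborel)" for x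
  proof -
    have "(\<integral>\<^sup>+ \<theta>. between x \<theta> \<partial>lborel) = (\<integral>\<^sup>+ \<theta>. ennreal (indicator {a..x} \<theta> * g \<theta>) \<partial>lborel)"
      unfolding between_def by (intro nn_integral_cong) (auto simp: indicator_def)
    also have "\<dots> = ennreal (integral {a..x} g)"
      using g integrable[OF g(1)] by (intro nn_integral_has_integral_lebesgue integrable_integral) auto
    finally show ?thesis ..
  qed
  then have "(\<integral>\<^sup>+ x. ennreal (integral {a..x} g) \<partial>PF) = (\<integral>\<^sup>+ x. \<integral>\<^sup>+ \<theta>. between x \<theta> \<partial>lborel \<partial>PF)"
    by simp
  also have "\<dots> = (\<integral>\<^sup>+ \<theta>. \<integral>\<^sup>+ x. between x \<theta> \<partial>PF \<partial>lborel)"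
    unfolding between_def by (rule PS.Fubini'[symmetric]) measurable
  also have "\<dots> = (\<integral>\<^sup>+ \<theta>. ennreal (indicator {a..1} \<theta> * (g \<theta> * (1 - F \<theta>))) \<partial>lborel)"
    unfolding between_def using g(2) by (simp add: nn_integral_const_above)
  also have "\<dots> = ennreal (integral {a..1} (\<lambda>\<theta>. g \<theta> * (1 - F \<theta>)))"
  proof (intro nn_integral_has_integral_lebesgue integrable_integral)
    show "(\<lambda>\<theta>. g \<theta> * (1 - F \<theta>)) integrable_on {a..1}"
      by (intro integrable continuous_intros g(1) continuous_on_F)
  qed (use g(2) F_le_1 in auto)
  finally show ?thesis .
qed

end

lemma measure_density_eq_0:
  fixes f :: "real \<Rightarrow> real"
  assumes "f \<in> borel_measurable borel" "X \<in> sets borel" "AE x in lborel. x \<in> X \<longrightarrow> f x = 0"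
  shows "measure (density lborel (\<lambda>x. ennreal (f x))) X = 0"
proof -
  have "emeasure (density lborel (\<lambda>x. ennreal (f x))) X = (\<integral>\<^sup>+ x. ennreal (f x) * indicator X x \<partial>lborel)"
    using assms by (subst emeasure_density) auto
  also have "\<dots> = 0"
    using assms by (subst nn_integral_0_iff_AE) (auto elim!: AE_mp simp: indicator_def)
  finally show ?thesis
    by (simp add: measure_def)
qed

lemma unit_interval_distribution_density:
  fixes f F :: "real \<Rightarrow> real"
  assumes f_meas: "f \<in> borel_measurable borel"
    and f_supp: "\<forall>x. x \<notin> {0..1} \<longrightarrow> f x = 0"
    and f_prob: "prob_space (density lborel (\<lambda>x. ennreal (f x)))"
    and full_support: "\<forall>x\<in>{0..1}. \<forall>e>0. measure (density lborel (\<lambda>x. ennreal (f x))) {x - e<..<x + e} > 0"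
    and F_def: "\<forall>x. F x = measure (density lborel (\<lambda>x. ennreal (f x))) {..x}"
  shows "unit_interval_distribution (density lborel (\<lambda>x. ennreal (f x))) F"
proof -
  let ?PF = "density lborel (\<lambda>x. ennreal (f x))"
  interpret prob_space ?PF
    by (rule f_prob)
  show ?thesis
  proof unfold_locales
    show "sets ?PF = sets borel"
      by simp
    show "measure ?PF {x} = 0" for x
    proof (rule measure_density_eq_0[OF f_meas])
      show "AE y in lborel. y \<in> {x} \<longrightarrow> f y = 0"
        using AE_lborel_singleton[of x] by eventually_elim simp
    qed simp
    show "measure ?PF {..<0} = 0" "measure ?PF {1<..} = 0"
      using f_supp by (auto intro!: measure_density_eq_0[OF f_meas])
    show "F x = measure ?PF {..x}" for x
      using F_def by simp
    show "0 < F x" if "0 < x" "x \<le> 1" for x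
    proof -
      have "0 < measure ?PF {x/2 - x/2<..<x/2 + x/2}"
        using full_support[rule_format, of "x/2" "x/2"] that by simp
      also have "\<dots> \<le> measure ?PF {..x}"
        by (intro finite_measure_mono) auto
      finally show ?thesis
        using F_def by simp
    qed
  qed
qed

section \<open>The tipping function\<close>

locale tipping_game = unit_interval_distribution +
  fixes n :: nat and vl :: real
  assumes n_ge_2: "2 \<le> n"
    and integral_F_pow_le: "\<forall>v\<in>{0..1}. integral {0..v} (\<lambda>\<theta>. F \<theta> ^ (n - 1)) \<le> v / real n"
    and vl_range: "vl \<in> {0..1}"
    and vl_eq: "integral {0..1} (\<lambda>\<theta>. F \<theta> ^ (n - 1)) - integral {vl..1} (\<lambda>\<theta>. F \<theta> ^ n)
          = (real n + 1) / (real n - 1) * integral {0..vl} (\<lambda>\<theta>. F \<theta> ^ (n - 1))"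
begin

definition Fpow :: "real \<Rightarrow> real" where
  "Fpow \<theta> = F \<theta> ^ (n - 1)"

definition tip :: "real \<Rightarrow> real" where
  "tip v = (if v < vl then 0 else 1/2 * integral {vl..v} Fpow)"

lemma continuous_on_Fpow: "continuous_on A Fpow"
  unfolding Fpow_def by (intro continuous_intros continuous_on_F)

lemma Fpow_integrable: "Fpow integrable_on {a..b}"
  by (intro integrable_continuous_interval continuous_on_Fpow)

lemma Fpow_nonneg: "0 \<le> Fpow x"
  unfolding Fpow_def by (simp add: F_nonneg)

lemma Fpow_mono: "x \<le> y \<Longrightarrow> Fpow x \<le> Fpow y"
  unfolding Fpow_def by (simp add: F_mono F_nonneg power_mono)

lemma Fpow_pos:
  assumes "0 < x" shows "0 < Fpow x"
proof -
  have "0 < Fpow (min x 1)"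
    unfolding Fpow_def using assms by (simp add: F_pos)
  also have "\<dots> \<le> Fpow x"
    by (intro Fpow_mono) auto
  finally show ?thesis .
qed

lemma F_pow_n: "F \<theta> ^ n = Fpow \<theta> * F \<theta>"
  unfolding Fpow_def using n_ge_2 by (simp flip: power_Suc2)

lemma integral_Fpow_le: "v \<in> {0..1} \<Longrightarrow> integral {0..v} Fpow \<le> v / real n"
  using integral_F_pow_le unfolding Fpow_def by auto

lemma integral_Fpow_nonneg: "0 \<le> integral {a..b} Fpow"
  by (intro integral_nonneg Fpow_integrable Fpow_nonneg)

lemma integral_Fpow_combine:
  "a \<le> b \<Longrightarrow> b \<le> c \<Longrightarrow> integral {a..b} Fpow + integral {b..c} Fpow = integral {a..c} Fpow"
  by (intro Henstock_Kurzweil_Integration.integral_combine Fpow_integrable)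

lemma integral_Fpow_pos:
  assumes "0 \<le> a" "a < b" shows "0 < integral {a..b} Fpow"
proof -
  define m where "m = (a + b) / 2"
  have "0 < (b - m) * Fpow m"
    using assms by (intro mult_pos_pos Fpow_pos) (auto simp: m_def)
  also have "\<dots> = integral {m..b} (\<lambda>_. Fpow m)"
    using assms by (simp add: m_def)
  also have "\<dots> \<le> integral {m..b} Fpow"
    by (intro integral_le Fpow_integrable Fpow_mono) auto
  also have "\<dots> \<le> integral {a..m} Fpow + integral {m..b} Fpow"
    using integral_Fpow_nonneg by simp
  also have "\<dots> = integral {a..b} Fpow"
    using assms by (intro integral_Fpow_combine) (auto simp: m_def)
  finally show ?thesis .
qed

text \<open>For vl = 0 the defining equation of vl forces F^(n-1) (1 - F) to vanish on [0,1], which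
  the intermediate value F = 1/2 rules out.\<close>
lemma vl_pos: "0 < vl"
proof (rule ccontr)
  assume "\<not> 0 < vl"
  then have "vl = 0"
    using vl_range by auto
  obtain x where x: "x \<in> {0..1}" "F x = 1/2"
    using IVT'[of F 0 "1/2" 1] F_0 F_eq_1[of 1] continuous_on_F by auto
  have cont: "continuous_on {0..1} (\<lambda>\<theta>. Fpow \<theta> * (1 - F \<theta>))"
    by (intro continuous_intros continuous_on_F continuous_on_Fpow)
  have "(\<lambda>\<theta>. F \<theta> ^ n) integrable_on {0..1}"
    by (intro integrable_continuous_interval continuous_intros continuous_on_F)
  then have "integral {0..1} (\<lambda>\<theta>. Fpow \<theta> - F \<theta> ^ n) = 0"
    using vl_eq \<open>vl = 0\<close> integral_diff[OF Fpow_integrable] unfolding Fpow_def by simp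
  then have "integral {0..1} (\<lambda>\<theta>. Fpow \<theta> * (1 - F \<theta>)) = 0"
    by (simp add: F_pow_n algebra_simps)
  moreover have "\<forall>\<theta>\<in>{0..1}. 0 \<le> Fpow \<theta> * (1 - F \<theta>)"
    by (simp add: Fpow_nonneg F_le_1)
  ultimately have "\<forall>\<theta>\<in>{0..1}. Fpow \<theta> * (1 - F \<theta>) = 0"
    using integral_eq_0_iff[OF cont] by simp
  then have "Fpow x * (1 - F x) = 0"
    using x(1) by blast
  then show False
    using x by (simp add: Fpow_def)
qed

lemma vl_less_1: "vl < 1"
proof (rule ccontr)
  assume "\<not> vl < 1"
  then have "integral {0..1} Fpow = (real n + 1) / (real n - 1) * integral {0..1} Fpow"
    using vl_eq vl_range unfolding Fpow_def by simp
  moreover have "0 < integral {0..1} Fpow"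
    by (rule integral_Fpow_pos) auto
  moreover have "1 < (real n + 1) / (real n - 1)"
    using n_ge_2 by (simp add: field_simps)
  ultimately show False
    by (metis less_irrefl mult_strict_right_mono mult_1)
qed

lemma tip_eq_integral: "tip v = 1/2 * integral {vl..v} Fpow"
  unfolding tip_def by simp

lemma tip_nonneg: "0 \<le> tip v"
  unfolding tip_eq_integral using integral_Fpow_nonneg by simp

lemma tip_eq_0: "v \<le> vl \<Longrightarrow> tip v = 0"
  unfolding tip_def by auto

lemma tip_pos: "vl < v \<Longrightarrow> 0 < tip v"
  unfolding tip_eq_integral using integral_Fpow_pos[of vl v] vl_pos by simp

lemma tip_diff:
  assumes "vl \<le> x" "x \<le> y" shows "tip y - tip x = 1/2 * integral {x..y} Fpow"
  using integral_Fpow_combine[OF assms] unfolding tip_eq_integral by simp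

lemma tip_strict_mono: "vl \<le> x \<Longrightarrow> x < y \<Longrightarrow> tip x < tip y"
  using tip_diff[of x y] integral_Fpow_pos[of x y] vl_pos by simp

lemma tip_mono: "x \<le> y \<Longrightarrow> tip x \<le> tip y"
  using tip_strict_mono[of x y] tip_eq_0[of x] tip_nonneg[of y] by (cases "vl \<le> x \<and> x < y") auto

lemma tip_le:
  assumes "v \<in> {0..1}" shows "tip v \<le> v / (2 * real n)"
proof -
  have "tip v \<le> 1/2 * integral {0..v} Fpow"
    using integral_Fpow_combine[of 0 vl v] integral_Fpow_nonneg[of 0 vl] integral_Fpow_nonneg[of 0 v] vl_pos
    unfolding tip_def by auto
  then show ?thesis
    using integral_Fpow_le[OF assms] by simp
qed

lemma tip_measurable[measurable]: "tip \<in> borel_measurable borel"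
  by (rule borel_measurable_mono) (simp add: mono_def tip_mono)

lemma continuous_on_tip: "continuous_on {vl..1} tip"
  unfolding tip_eq_integral[abs_def]
  by (intro continuous_intros indefinite_integral_continuous_1 Fpow_integrable)

text \<open>Tips beyond the largest possible tip are read as value 1; the value at nonpositive
  arguments is irrelevant.\<close>
definition tip_inv :: "real \<Rightarrow> real" where
  "tip_inv x = (if x \<le> 0 then vl else if tip 1 \<le> x then 1 else (THE v. v \<in> {vl..1} \<and> tip v = x))"

lemma tip_inj: "vl \<le> x \<Longrightarrow> vl \<le> y \<Longrightarrow> tip x = tip y \<Longrightarrow> x = y"
  using tip_strict_mono by (metis linorder_neq_iff)

lemma tip_inv_between:
  assumes "0 < x" "x < tip 1" shows "tip_inv x \<in> {vl..1}" and "tip (tip_inv x) = x"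
proof -
  obtain v where v: "v \<in> {vl..1}" "tip v = x"
    using IVT'[of tip vl x 1] tip_eq_0[of vl] assms continuous_on_tip vl_less_1 by auto
  have "(THE v. v \<in> {vl..1} \<and> tip v = x) = v"
    using v by (intro the_equality) (auto intro: tip_inj)
  then show "tip_inv x \<in> {vl..1}" "tip (tip_inv x) = x"
    using assms v unfolding tip_inv_def by auto
qed

lemma tip_inv_range: "tip_inv x \<in> {vl..1}"
  using tip_inv_between[of x] vl_less_1 unfolding tip_inv_def by auto

lemma tip_inv_tip:
  assumes "vl < v" "v \<le> 1" shows "tip_inv (tip v) = v"
proof (cases "v = 1")
  case False
  then have "0 < tip v" "tip v < tip 1"
    using assms by (auto intro: tip_pos tip_strict_mono)
  then show ?thesis
    using tip_inv_between[of "tip v"] tip_inj[of "tip_inv (tip v)" v] assms by auto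
qed (use tip_pos[of 1] vl_less_1 in \<open>auto simp: tip_inv_def\<close>)

lemma tip_inv_mono:
  assumes "x \<le> y" shows "tip_inv x \<le> tip_inv y"
proof -
  consider "x \<le> 0" | "tip 1 \<le> y" | "0 < x" "y < tip 1"
    using assms by fastforce
  then show ?thesis
  proof cases
    case 1
    then show ?thesis using tip_inv_range[of y] unfolding tip_inv_def by auto
  next
    case 2
    then show ?thesis
      using tip_inv_range[of x] tip_pos[of 1] vl_less_1 unfolding tip_inv_def[of y] by auto
  next
    case 3
    then show ?thesis
      using assms tip_inv_between[of x] tip_inv_between[of y] tip_strict_mono[of "tip_inv y" "tip_inv x"]
      by force
  qed
qed

lemma tip_inv_measurable[measurable]: "tip_inv \<in> borel_measurable borel"
  by (rule borel_measurable_mono) (simp add: mono_def tip_inv_mono)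

lemma tip_inv_ge:
  assumes "0 < x" "tip_inv x < 1" shows "2 * real n * x \<le> tip_inv x"
proof -
  have "x < tip 1"
    using assms unfolding tip_inv_def by (auto split: if_splits)
  then have "x \<le> tip_inv x / (2 * real n)"
    using tip_inv_between[OF assms(1)] tip_le[of "tip_inv x"] vl_pos by auto
  then show ?thesis
    using n_ge_2 by (simp add: field_simps)
qed

lemma integral_Fpow_tail:
  "integral {vl..1} (\<lambda>\<theta>. Fpow \<theta> * (1 - F \<theta>)) = 2 / (real n - 1) * integral {0..vl} Fpow"
proof -
  have "(\<lambda>\<theta>. F \<theta> ^ n) integrable_on {vl..1}"
    by (intro integrable_continuous_interval continuous_intros continuous_on_F)
  then have "integral {vl..1} (\<lambda>\<theta>. Fpow \<theta> * (1 - F \<theta>)) = integral {vl..1} Fpow - integral {vl..1} (\<lambda>\<theta>. F \<theta> ^ n)"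
    using integral_diff[OF Fpow_integrable] by (simp add: F_pow_n algebra_simps)
  also have "\<dots> = ((real n + 1) / (real n - 1) - 1) * integral {0..vl} Fpow"
    using vl_eq integral_Fpow_combine[of 0 vl 1] vl_pos vl_less_1
    unfolding Fpow_def by (simp add: algebra_simps)
  also have "(real n + 1) / (real n - 1) - 1 = 2 / (real n - 1)"
    using n_ge_2 by (simp add: field_simps)
  finally show ?thesis .
qed

lemma nn_integral_tip: "(\<integral>\<^sup>+ x. ennreal (tip x) \<partial>PF) = ennreal (integral {0..vl} Fpow / (real n - 1))"
proof -
  have "(\<lambda>x. integral {vl..x} Fpow) = (\<lambda>x. 2 * tip x)"
    by (simp add: tip_eq_integral)
  then have [measurable]: "(\<lambda>x. integral {vl..x} Fpow) \<in> borel_measurable borel"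
    by simp
  have "ennreal (tip x) = ennreal (1/2) * ennreal (integral {vl..x} Fpow)" for x
    by (subst ennreal_mult[symmetric]) (auto simp: tip_eq_integral integral_Fpow_nonneg)
  then have "(\<integral>\<^sup>+ x. ennreal (tip x) \<partial>PF) = ennreal (1/2) * (\<integral>\<^sup>+ x. ennreal (integral {vl..x} Fpow) \<partial>PF)"
    by (simp add: nn_integral_cmult)
  also have "\<dots> = ennreal (1/2) * ennreal (2 / (real n - 1) * integral {0..vl} Fpow)"
    by (simp only: nn_integral_indefinite_integral[OF continuous_on_Fpow Fpow_nonneg] integral_Fpow_tail)
  also have "\<dots> = ennreal (1/2 * (2 / (real n - 1) * integral {0..vl} Fpow))"
    using n_ge_2 integral_Fpow_nonneg[of 0 vl] by (intro ennreal_mult[symmetric]) auto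
  finally show ?thesis
    by simp
qed

lemma integrable_tip: "integrable PF tip"
  using nn_integral_tip by (intro integrableI_nonneg) (auto simp: tip_nonneg)

lemma integral_tip: "integral\<^sup>L PF tip = integral {0..vl} Fpow / (real n - 1)"
  using nn_integral_tip integral_Fpow_nonneg[of 0 vl] n_ge_2
  by (simp add: integral_eq_nn_integral tip_nonneg)

section \<open>The beliefs of buyer 0\<close>

definition PF_low :: "real measure" where
  "PF_low = uniform_measure PF {0..vl}"

definition low_draws :: "vec measure" where
  "low_draws = PiM {1..n} (\<lambda>_. PF_low)"

definition clip :: "real \<Rightarrow> real" where
  "clip x = max 0 (min vl x)"

text \<open>A bidder tipping 0 has a value drawn from PF conditioned on [0, vl], clipped so that it
  lies there surely; a positive tip reveals the value through tip_inv.\<close>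
definition belief_draw :: "vec \<Rightarrow> vec \<Rightarrow> vec" where
  "belief_draw \<tau> w = restrict (\<lambda>j. if \<tau> j \<le> 0 then clip (w j) else tip_inv (\<tau> j)) {1..n}"

definition belief :: "vec \<Rightarrow> vec measure" where
  "belief \<tau> = distr low_draws (vals_meas n PF) (belief_draw \<tau>)"

lemma sets_PF_low[simp, measurable_cong]: "sets PF_low = sets borel"
  unfolding PF_low_def by simp

lemma space_PF_low[simp]: "space PF_low = UNIV"
  unfolding PF_low_def by simp

lemma F_vl_pos: "0 < F vl"
  using F_pos vl_pos vl_less_1 by simp

lemma prob_space_PF_low: "prob_space PF_low"
  unfolding PF_low_def using F_vl_pos measure_atLeastAtMost_0[of vl] vl_pos
  by (intro prob_space_uniform_measure) (auto simp: emeasure_eq_measure)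

lemma prob_space_low_draws: "prob_space low_draws"
  unfolding low_draws_def by (intro prob_space_PiM prob_space_PF_low)

lemma clip_measurable[measurable]: "clip \<in> borel_measurable borel"
  unfolding clip_def by measurable

lemma belief_draw_measurable[measurable]:
  "(\<lambda>(\<tau>, w). belief_draw \<tau> w) \<in> tips_space n \<Otimes>\<^sub>M low_draws \<rightarrow>\<^sub>M vals_meas n PF"
  "belief_draw \<tau> \<in> low_draws \<rightarrow>\<^sub>M vals_meas n PF"
  unfolding belief_draw_def low_draws_def by measurable

lemma prob_space_belief: "prob_space (belief \<tau>)"
  unfolding belief_def by (intro prob_space.prob_space_distr prob_space_low_draws belief_draw_measurable)

lemma belief_measurable: "belief \<in> tips_space n \<rightarrow>\<^sub>M prob_algebra (vals_meas n PF)"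
proof (rule measurable_prob_algebraI)
  show "prob_space (belief \<tau>)" for \<tau>
    by (rule prob_space_belief)
  have "(\<lambda>_. low_draws) \<in> tips_space n \<rightarrow>\<^sub>M subprob_algebra low_draws"
    using prob_space_low_draws by (simp add: space_subprob_algebra prob_space_imp_subprob_space)
  then show "belief \<in> tips_space n \<rightarrow>\<^sub>M subprob_algebra (vals_meas n PF)"
    unfolding belief_def[abs_def] using measurable_distr2[OF belief_draw_measurable(1)] by simp
qed

lemma AE_belief:
  assumes "{vs \<in> space (vals_meas n PF). P vs} \<in> sets (vals_meas n PF)" "\<And>w. P (belief_draw \<tau> w)"
  shows "AE vs in belief \<tau>. P vs"
  unfolding belief_def using assms belief_draw_measurable(2) by (subst AE_distr_iff) auto

lemma belief_draw_range: "j \<in> {1..n} \<Longrightarrow> belief_draw \<tau> w j \<in> {0..1}"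
  unfolding belief_draw_def clip_def using tip_inv_range[of "\<tau> j"] vl_pos vl_less_1 by auto

lemma AE_belief_range: "AE vs in belief \<tau>. \<forall>j\<in>{1..n}. vs j \<in> {0..1}"
  by (rule AE_belief) (measurable, use belief_draw_range in blast)

lemma AE_belief_small_tips:
  assumes "\<forall>j\<in>{1..n}. 0 \<le> \<tau> j" shows "AE vs in belief \<tau>. small_tips n \<tau> vs"
proof (rule AE_belief)
  show "{vs \<in> space (vals_meas n PF). small_tips n \<tau> vs} \<in> sets (vals_meas n PF)"
    unfolding small_tips_def by measurable
  fix w
  have "2 * real n * \<tau> j \<le> belief_draw \<tau> w j" if "j \<in> {1..n}" "belief_draw \<tau> w j < 1" for j
  proof (cases "\<tau> j \<le> 0")
    case True
    then have "\<tau> j = 0"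
      using assms that(1) by force
    then show ?thesis
      using belief_draw_range[OF that(1)] by simp
  next
    case False
    then show ?thesis
      using that tip_inv_ge[of "\<tau> j"] by (simp add: belief_draw_def)
  qed
  then show "small_tips n \<tau> (belief_draw \<tau> w)"
    unfolding small_tips_def using belief_draw_range by auto
qed

definition low_prob :: "real set \<Rightarrow> real" where
  "low_prob X = measure PF ({0..vl} \<inter> X) / F vl"

lemma low_prob_nonneg: "0 \<le> low_prob X"
  unfolding low_prob_def using F_vl_pos by simp

lemma emeasure_PF_low_clip:
  assumes "X \<in> sets borel" shows "emeasure PF_low {w. clip w \<in> X} = ennreal (low_prob X)"
proof -
  have "{w. clip w \<in> X} \<in> sets borel"
    using assms by measurable
  moreover have "{0..vl} \<inter> {w. clip w \<in> X} = {0..vl} \<inter> X"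
    unfolding clip_def by auto
  ultimately have "emeasure PF_low {w. clip w \<in> X} = ennreal (measure PF ({0..vl} \<inter> X)) / ennreal (F vl)"
    unfolding PF_low_def using measure_atLeastAtMost_0[of vl] vl_pos
    by (simp add: emeasure_uniform_measure emeasure_eq_measure)
  then show ?thesis
    unfolding low_prob_def using F_vl_pos by (simp add: divide_ennreal)
qed

lemma measure_split_at_vl:
  assumes "X \<in> sets borel"
  shows "measure PF X = measure PF ({0..vl} \<inter> X) + measure PF (X \<inter> {vl<..})"
proof -
  have "measure PF (X \<inter> {..<0}) = 0"
    using finite_measure_mono[of "X \<inter> {..<0}" "{..<0}"] measure_below_0 by (simp add: measure_le_0_iff)
  moreover have "X = (X \<inter> {..<0}) \<union> ({0..vl} \<inter> X) \<union> (X \<inter> {vl<..})"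
    using vl_pos by auto
  then have "measure PF X = measure PF ((X \<inter> {..<0}) \<union> ({0..vl} \<inter> X)) + measure PF (X \<inter> {vl<..})"
    using assms vl_pos by (subst (1) \<open>X = _\<close>, intro finite_measure_Union) auto
  moreover have "measure PF ((X \<inter> {..<0}) \<union> ({0..vl} \<inter> X)) = measure PF (X \<inter> {..<0}) + measure PF ({0..vl} \<inter> X)"
    using assms by (intro finite_measure_Union) auto
  ultimately show ?thesis
    by simp
qed

lemma nn_integral_resample_low_component:
  assumes "X \<in> sets borel"
  shows "(\<integral>\<^sup>+ x. (if x \<le> vl then ennreal (low_prob X) else indicator X x) \<partial>PF) = emeasure PF X"
proof -
  have "(\<integral>\<^sup>+ x. (if x \<le> vl then ennreal (low_prob X) else indicator X x) \<partial>PF)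
      = (\<integral>\<^sup>+ x. ennreal (low_prob X) * indicator {..vl} x + indicator (X \<inter> {vl<..}) x \<partial>PF)"
    by (intro nn_integral_cong) (auto simp: indicator_def)
  also have "\<dots> = ennreal (low_prob X) * emeasure PF {..vl} + emeasure PF (X \<inter> {vl<..})"
    using assms by (simp add: nn_integral_add nn_integral_cmult_indicator)
  also have "\<dots> = ennreal (low_prob X * F vl + measure PF (X \<inter> {vl<..}))"
    using low_prob_nonneg F_nonneg
    by (simp add: emeasure_eq_measure F_eq ennreal_mult ennreal_plus[symmetric])
  also have "low_prob X * F vl = measure PF ({0..vl} \<inter> X)"
    unfolding low_prob_def using F_vl_pos by simp
  finally show ?thesis
    using measure_split_at_vl[OF assms] by (simp add: emeasure_eq_measure)
qed

definition resample_low :: "vec \<Rightarrow> vec \<Rightarrow> vec" where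
  "resample_low vs w = restrict (\<lambda>j. if vs j \<le> vl then clip (w j) else vs j) {1..n}"

lemma resample_low_measurable[measurable]:
  "(\<lambda>(vs, w). resample_low vs w) \<in> vals_meas n PF \<Otimes>\<^sub>M low_draws \<rightarrow>\<^sub>M vals_meas n PF"
  "resample_low vs \<in> low_draws \<rightarrow>\<^sub>M vals_meas n PF"
  unfolding resample_low_def low_draws_def by measurable

lemma nn_integral_resample_low_box:
  assumes X: "\<And>j. j \<in> {1..n} \<Longrightarrow> X j \<in> sets borel"
  shows "(\<integral>\<^sup>+ w. indicator (Pi\<^sub>E {1..n} X) (resample_low vs w) \<partial>low_draws)
           = (\<Prod>j\<in>{1..n}. if vs j \<le> vl then ennreal (low_prob (X j)) else indicator (X j) (vs j))"
proof -
  interpret PL: prob_space PF_low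
    by (rule prob_space_PF_low)
  interpret L: product_prob_space "\<lambda>_. PF_low" "{1..n}"
    by unfold_locales
  define Y where "Y j = (if vs j \<le> vl then {w. clip w \<in> X j} else if vs j \<in> X j then UNIV else {})" for j
  have Y: "Y j \<in> sets borel" if "j \<in> {1..n}" for j
    using X[OF that] unfolding Y_def by auto
  have "(\<integral>\<^sup>+ w. indicator (Pi\<^sub>E {1..n} X) (resample_low vs w) \<partial>low_draws)
      = (\<integral>\<^sup>+ w. indicator (Pi\<^sub>E {1..n} Y) w \<partial>low_draws)"
    unfolding low_draws_def
    by (intro nn_integral_cong) (auto simp: indicator_def resample_low_def Y_def PiE_def Pi_def space_PiM)
  also have "\<dots> = emeasure low_draws (Pi\<^sub>E {1..n} Y)"
    unfolding low_draws_def using Y by (intro nn_integral_indicator sets_PiM_I_finite) auto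
  also have "\<dots> = (\<Prod>j\<in>{1..n}. emeasure PF_low (Y j))"
    unfolding low_draws_def using Y by (intro L.emeasure_PiM) auto
  also have "\<dots> = (\<Prod>j\<in>{1..n}. if vs j \<le> vl then ennreal (low_prob (X j)) else indicator (X j) (vs j))"
    using emeasure_PF_low_clip X prob_space.emeasure_space_1[OF prob_space_PF_low]
    by (intro prod.cong) (auto simp: Y_def indicator_def)
  finally show ?thesis .
qed

lemma distr_resample_low:
  "distr (vals_meas n PF \<Otimes>\<^sub>M low_draws) (vals_meas n PF) (\<lambda>(vs, w). resample_low vs w) = vals_meas n PF"
proof -
  interpret P: product_prob_space "\<lambda>_. PF" "{1..n}"
    by unfold_locales
  interpret L: prob_space low_draws
    by (rule prob_space_low_draws)
  show ?thesis
  proof (rule P.PiM_eqI)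
    fix X assume X: "\<And>j. j \<in> {1..n} \<Longrightarrow> X j \<in> sets PF"
    have box: "Pi\<^sub>E {1..n} X \<in> sets (vals_meas n PF)"
      using X by (intro sets_PiM_I_finite) auto
    define h where "h j x = (if x \<le> vl then ennreal (low_prob (X j)) else indicator (X j) x)" for j x
    have "emeasure (distr (vals_meas n PF \<Otimes>\<^sub>M low_draws) (vals_meas n PF) (\<lambda>(vs, w). resample_low vs w))
        (Pi\<^sub>E {1..n} X) = (\<integral>\<^sup>+ z. indicator (Pi\<^sub>E {1..n} X) z
        \<partial>distr (vals_meas n PF \<Otimes>\<^sub>M low_draws) (vals_meas n PF) (\<lambda>(vs, w). resample_low vs w))"
      using box by simp
    also have "\<dots> = (\<integral>\<^sup>+ z. indicator (Pi\<^sub>E {1..n} X) (case z of (vs, w) \<Rightarrow> resample_low vs w)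
        \<partial>(vals_meas n PF \<Otimes>\<^sub>M low_draws))"
      using box by (subst nn_integral_distr[OF resample_low_measurable(1)]) auto
    also have "\<dots> = (\<integral>\<^sup>+ vs. \<integral>\<^sup>+ w. indicator (Pi\<^sub>E {1..n} X) (resample_low vs w) \<partial>low_draws \<partial>vals_meas n PF)"
    proof -
      have "(\<lambda>z. indicator (Pi\<^sub>E {1..n} X) (case z of (vs, w) \<Rightarrow> resample_low vs w) :: ennreal)
          \<in> borel_measurable (vals_meas n PF \<Otimes>\<^sub>M low_draws)"
        using box by measurable
      from L.nn_integral_fst[OF this] show ?thesis
        by simp
    qed
    also have "\<dots> = (\<integral>\<^sup>+ vs. (\<Prod>j\<in>{1..n}. h j (vs j)) \<partial>vals_meas n PF)"
      using X unfolding h_def by (intro nn_integral_cong nn_integral_resample_low_box) auto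
    also have "\<dots> = (\<Prod>j\<in>{1..n}. integral\<^sup>N PF (h j))"
      using X unfolding h_def by (intro P.product_nn_integral_prod) auto
    also have "\<dots> = (\<Prod>j\<in>{1..n}. emeasure PF (X j))"
      using X unfolding h_def by (intro prod.cong refl nn_integral_resample_low_component) auto
    finally show "emeasure (distr (vals_meas n PF \<Otimes>\<^sub>M low_draws) (vals_meas n PF)
        (\<lambda>(vs, w). resample_low vs w)) (Pi\<^sub>E {1..n} X) = (\<Prod>j\<in>{1..n}. emeasure PF (X j))" .
  qed auto
qed

lemma nn_integral_resample_low:
  assumes [measurable]: "h \<in> borel_measurable (vals_meas n PF)"
  shows "(\<integral>\<^sup>+ vs. \<integral>\<^sup>+ w. h (resample_low vs w) \<partial>low_draws \<partial>vals_meas n PF) = (\<integral>\<^sup>+ x. h x \<partial>vals_meas n PF)"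
proof -
  interpret L: prob_space low_draws
    by (rule prob_space_low_draws)
  let ?V = "vals_meas n PF"
  have "(\<lambda>z. h (case z of (vs, w) \<Rightarrow> resample_low vs w)) \<in> borel_measurable (?V \<Otimes>\<^sub>M low_draws)"
    by measurable
  then have "(\<integral>\<^sup>+ vs. \<integral>\<^sup>+ w. h (resample_low vs w) \<partial>low_draws \<partial>?V)
      = (\<integral>\<^sup>+ z. h (case z of (vs, w) \<Rightarrow> resample_low vs w) \<partial>(?V \<Otimes>\<^sub>M low_draws))"
    by (simp add: L.nn_integral_fst[symmetric])
  also have "\<dots> = (\<integral>\<^sup>+ x. h x \<partial>distr (?V \<Otimes>\<^sub>M low_draws) ?V (\<lambda>(vs, w). resample_low vs w))"
    using nn_integral_distr[OF resample_low_measurable(1), of h] assms by (simp add: case_prod_beta')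
  finally show ?thesis
    unfolding distr_resample_low .
qed

lemma tipvec_measurable[measurable]: "tipvec n tip \<in> vals_meas n PF \<rightarrow>\<^sub>M tips_space n"
  unfolding tipvec_def by measurable

lemma tipvec_resample_low: "tipvec n tip (resample_low vs w) = tipvec n tip vs"
proof -
  have "tip (clip x) = 0" for x
    unfolding clip_def using vl_pos by (intro tip_eq_0) auto
  then show ?thesis
    unfolding tipvec_def resample_low_def using tip_eq_0 by (intro restrict_ext) auto
qed

lemma belief_draw_tipvec:
  assumes "\<forall>j\<in>{1..n}. vs j \<in> {0..1}"
  shows "belief_draw (tipvec n tip vs) w = resample_low vs w"
  unfolding belief_draw_def resample_low_def tipvec_def
proof (intro restrict_ext)
  fix j assume j: "j \<in> {1..n}"
  show "(if restrict (\<lambda>j. tip (vs j)) {1..n} j \<le> 0 then clip (w j)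
         else tip_inv (restrict (\<lambda>j. tip (vs j)) {1..n} j))
      = (if vs j \<le> vl then clip (w j) else vs j)"
    using j assms tip_eq_0[of "vs j"] tip_pos[of "vs j"] tip_inv_tip[of "vs j"] by auto
qed

lemma emeasure_belief_tipvec:
  assumes "\<forall>j\<in>{1..n}. vs j \<in> {0..1}" "B \<in> sets (vals_meas n PF)"
  shows "emeasure (belief (tipvec n tip vs)) B = (\<integral>\<^sup>+ w. indicator B (resample_low vs w) \<partial>low_draws)"
proof -
  have "emeasure (belief (tipvec n tip vs)) B = (\<integral>\<^sup>+ x. indicator B x \<partial>belief (tipvec n tip vs))"
    using assms(2) unfolding belief_def by simp
  also have "\<dots> = (\<integral>\<^sup>+ w. indicator B (belief_draw (tipvec n tip vs) w) \<partial>low_draws)"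
    using assms(2) unfolding belief_def by (subst nn_integral_distr[OF belief_draw_measurable(2)]) auto
  finally have "emeasure (belief (tipvec n tip vs)) B
      = (\<integral>\<^sup>+ w. indicator B (belief_draw (tipvec n tip vs) w) \<partial>low_draws)" .
  then show ?thesis
    using belief_draw_tipvec[OF assms(1)] by simp
qed

text \<open>Given the tips, redrawing the values below vl is a draw from the belief, and by
  nn_integral_resample_low it does not change the distribution of the values; so the belief is a
  regular conditional distribution of the values given the tips.\<close>
lemma consistent_beliefs_belief: "consistent_beliefs n PF tip belief"
  unfolding consistent_beliefs_def
proof (intro conjI belief_measurable allI ballI AE_belief_range)
  fix A B assume A: "A \<in> sets (tips_space n)" and B: "B \<in> sets (vals_meas n PF)"
  let ?V = "vals_meas n PF"
  define h :: "vec \<Rightarrow> ennreal" where "h x = indicator A (tipvec n tip x) * indicator B x" for x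
  have h_measurable[measurable]: "h \<in> borel_measurable ?V"
    unfolding h_def using A B by measurable
  have "AE vs in ?V. indicator A (tipvec n tip vs) * emeasure (belief (tipvec n tip vs)) B
      = (\<integral>\<^sup>+ w. h (resample_low vs w) \<partial>low_draws)"
    using AE_PiM_in_unit_interval[of "{1..n}", OF finite_atLeastAtMost]
  proof eventually_elim
    fix vs :: vec assume vs: "\<forall>j\<in>{1..n}. vs j \<in> {0..1}"
    have "(\<lambda>w. indicator B (resample_low vs w) :: ennreal) \<in> borel_measurable low_draws"
      using B by measurable
    then show "indicator A (tipvec n tip vs) * emeasure (belief (tipvec n tip vs)) B
        = (\<integral>\<^sup>+ w. h (resample_low vs w) \<partial>low_draws)"
      unfolding h_def tipvec_resample_low by (simp add: emeasure_belief_tipvec[OF vs B] nn_integral_cmult)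
  qed
  then have "(\<integral>\<^sup>+ vs. indicator A (tipvec n tip vs) * emeasure (belief (tipvec n tip vs)) B \<partial>?V)
      = (\<integral>\<^sup>+ vs. \<integral>\<^sup>+ w. h (resample_low vs w) \<partial>low_draws \<partial>?V)"
    by (rule nn_integral_cong_AE)
  also have "\<dots> = (\<integral>\<^sup>+ x. h x \<partial>?V)"
    by (rule nn_integral_resample_low[OF h_measurable])
  also have "\<dots> = (\<integral>\<^sup>+ x. indicator ({vs \<in> space ?V. tipvec n tip vs \<in> A} \<inter> B) x \<partial>?V)"
    unfolding h_def by (intro nn_integral_cong) (auto simp: indicator_def)
  also have "\<dots> = emeasure ?V ({vs \<in> space ?V. tipvec n tip vs \<in> A} \<inter> B)"
  proof (intro nn_integral_indicator sets.Int B)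
    have "tipvec n tip -` A \<inter> space ?V \<in> sets ?V"
      by (rule measurable_sets[OF tipvec_measurable A])
    then show "{vs \<in> space ?V. tipvec n tip vs \<in> A} \<in> sets ?V"
      by (simp add: vimage_def Int_def conj_commute)
  qed
  finally show "emeasure ?V ({vs \<in> space ?V. tipvec n tip vs \<in> A} \<inter> B)
      = (\<integral>\<^sup>+ vs. indicator A (tipvec n tip vs) * emeasure (belief (tipvec n tip vs)) B \<partial>?V)"
    by simp
qed

section \<open>Optimality of the bribe strategy\<close>

lemma EU_0_bribe_strategy:
  assumes "0 \<le> v0"
  shows "max 0 (v0 - (\<Sum>j\<in>{1..n}. \<tau> j)) \<le> EU_0 n 0 (belief \<tau>) \<tau> v0 (bribe_strategy n nb \<tau> v0)"
proof -
  interpret B: prob_space "belief \<tau>"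
    by (rule prob_space_belief)
  show ?thesis
  proof (cases "(\<Sum>j\<in>{1..n}. \<tau> j) \<le> v0")
    case True
    then show ?thesis
      unfolding EU_0_def using assms by (simp add: util_0_bribe B.prob_space)
  next
    case False
    then show ?thesis
      unfolding EU_0_def using assms util_0_no_bribe_nonneg by (simp add: integral_nonneg_AE)
  qed
qed

lemma EU_0_le_bribe_surplus:
  assumes tips: "\<forall>j\<in>{1..n}. 0 \<le> \<tau> j" and v0: "v0 \<in> {0..1}" and a: "valid_action0 n a"
  shows "EU_0 n 0 (belief \<tau>) \<tau> v0 a \<le> max 0 (v0 - (\<Sum>j\<in>{1..n}. \<tau> j))"
proof (cases "integrable (belief \<tau>) (\<lambda>vs. util_0 n 0 v0 vs \<tau> a)")
  case True
  interpret B: prob_space "belief \<tau>"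
    by (rule prob_space_belief)
  have "AE vs in belief \<tau>. util_0 n 0 v0 vs \<tau> a \<le> max 0 (v0 - (\<Sum>j\<in>{1..n}. \<tau> j))"
    using AE_belief_small_tips[OF tips]
    by eventually_elim (use util_0_le_bribe_surplus[OF tips _ _ _ a] v0 in auto)
  then have "EU_0 n 0 (belief \<tau>) \<tau> v0 a \<le> (\<integral>_. max 0 (v0 - (\<Sum>j\<in>{1..n}. \<tau> j)) \<partial>belief \<tau>)"
    unfolding EU_0_def by (intro integral_mono_AE True) auto
  then show ?thesis
    by (simp add: B.prob_space)
next
  case False
  then show ?thesis
    unfolding EU_0_def by (simp add: not_integrable_integral_eq)
qed

lemma win_prob_bribe_strategy:
  assumes v0: "v0 \<in> {0..1}" and tips: "\<forall>j\<in>{1..n}. 0 \<le> \<tau> j"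
  shows "win_prob_0 n 0 (belief \<tau>) \<tau> v0 (fst (bribe_strategy n nb \<tau> v0))
           = (if (\<Sum>j\<in>{1..n}. \<tau> j) \<le> v0 then 1 else 0)"
proof -
  interpret B: prob_space "belief \<tau>"
    by (rule prob_space_belief)
  show ?thesis
  proof (cases "(\<Sum>j\<in>{1..n}. \<tau> j) \<le> v0")
    case True
    then show ?thesis
      unfolding win_prob_0_def using v0 by (simp add: included_bids_bribe B.prob_space)
  next
    case False
    define S where "S = {vs \<in> space (belief \<tau>). \<forall>j\<in>{1..n}. vs j < v0}"
    have "S \<in> sets (belief \<tau>)"
      unfolding S_def belief_def by simp measurable
    moreover have "AE vs in belief \<tau>. vs \<notin> S"
      using AE_belief_small_tips[OF tips]
      by (rule AE_mp) (use exists_value_above_if_no_bribe False v0 in \<open>force simp: S_def\<close>)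
    ultimately have "measure (belief \<tau>) S = 0"
      by (simp add: AE_iff_null_sets[symmetric] measure_def null_setsD1)
    then show ?thesis
      unfolding win_prob_0_def using False v0
      by (simp add: S_def bribe_strategy_def included_bids_no_offer)
  qed
qed

end

section \<open>Deviations of a bidder\<close>

lemma capped_payoff_le_quadratic:
  fixes S G s :: real
  assumes "0 \<le> S" "S \<le> 1/2" "0 \<le> G" "G \<le> 1" "0 \<le> s"
  shows "min 1 (S + s) * (G - s) \<le> (S + min s (1/2)) * (G - min s (1/2))"
proof (cases "s \<le> 1/2")
  case False
  have "min 1 (S + s) * (G - s) \<le> (S + 1/2) * (G - 1/2)"
  proof (cases "S + s \<le> 1")
    case True
    have "0 \<le> (s - 1/2) * (S + s + 1/2 - G)"
      using False assms by (intro mult_nonneg_nonneg) auto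
    then show ?thesis
      using True by (simp add: algebra_simps)
  next
    case False
    have "0 \<le> (S - 1/2) * (G - 3/2)"
      using assms by (intro mult_nonpos_nonpos) auto
    then have "G - 1 + S \<le> (S + 1/2) * (G - 1/2)"
      by (simp add: field_simps)
    then show ?thesis
      using False by simp
  qed
  then show ?thesis
    using False by simp
qed (use assms in auto)

lemma measure_unif01_lessThan: "0 \<le> x \<Longrightarrow> measure unif01 {..<x} = min 1 x"
proof -
  assume "0 \<le> x"
  have "emeasure unif01 {..<x} = emeasure lborel ({0..1} \<inter> {..<x}) / emeasure lborel {0..1::real}"
    by (rule emeasure_uniform_measure) auto
  also have "{0..1} \<inter> {..<x} = (if x \<le> 1 then {0..<x} else {0..1})"
    by auto
  finally show ?thesis
    using \<open>0 \<le> x\<close> by (simp add: measure_def divide_ennreal_def)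
qed

locale tipping_bidder = tipping_game +
  fixes i :: nat and v :: real
  assumes i: "i \<in> {1..n}" and v: "v \<in> {0..1}"
begin

definition others :: "nat set" where
  "others = {1..n} - {i}"

abbreviation others_vals :: "vec measure" where
  "others_vals \<equiv> PiM others (\<lambda>_. PF)"

definition others_tip :: "vec \<Rightarrow> real" where
  "others_tip w = (\<Sum>j\<in>others. tip (w j))"

definition surplus :: "vec \<Rightarrow> real" where
  "surplus w = max 0 (v - highest others w)"

definition payoff :: "real \<Rightarrow> real \<times> vec \<Rightarrow> real" where
  "payoff s z = (if s + others_tip (snd z) \<le> fst z then 0 else surplus (snd z) - s)"

definition quad_payoff :: "real \<Rightarrow> real" where
  "quad_payoff x = (\<integral>w. (others_tip w + x) * (surplus w - x) \<partial>others_vals)"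

lemma finite_others[simp]: "finite others"
  unfolding others_def by simp

lemma card_others: "card others = n - 1"
  unfolding others_def using i by (simp add: card_Diff_singleton)

lemma prob_space_others_vals: "prob_space others_vals"
  by (intro prob_space_PiM prob_space_axioms)

lemma others_tip_measurable[measurable]: "others_tip \<in> borel_measurable others_vals"
  unfolding others_tip_def by measurable

lemma surplus_measurable[measurable]: "surplus \<in> borel_measurable others_vals"
  unfolding surplus_def by measurable

lemma payoff_measurable[measurable]: "payoff s \<in> borel_measurable (unif01 \<Otimes>\<^sub>M others_vals)"
  unfolding payoff_def by measurable

lemma others_tip_nonneg: "0 \<le> others_tip w"
  unfolding others_tip_def by (intro sum_nonneg) (auto simp: tip_nonneg)

lemma others_tip_le:
  assumes "\<forall>j\<in>others. w j \<in> {0..1}" shows "others_tip w \<le> 1/2"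
proof -
  have "others_tip w \<le> (\<Sum>j\<in>others. 1 / (2 * real n))"
    unfolding others_tip_def
  proof (intro sum_mono)
    fix j assume "j \<in> others"
    then have "tip (w j) \<le> w j / (2 * real n)" "w j \<le> 1"
      using assms tip_le by auto
    then show "tip (w j) \<le> 1 / (2 * real n)"
      by (smt (verit) divide_right_mono of_nat_0_le_iff)
  qed
  also have "\<dots> \<le> 1/2"
    using n_ge_2 by (simp add: card_others field_simps)
  finally show ?thesis .
qed

lemma surplus_bounds: "0 \<le> surplus w" "surplus w \<le> 1"
  unfolding surplus_def using v highest_nonneg[of others w] by auto

lemma AE_others_vals: "AE w in others_vals. \<forall>j\<in>others. w j \<in> {0..1}"
  by (rule AE_PiM_in_unit_interval) simp

lemma tip_v_le: "tip v \<le> 1/4"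
proof -
  have "tip v \<le> v / (2 * real n)"
    using tip_le v by simp
  also have "\<dots> \<le> 1 / 4"
    using n_ge_2 v by (simp add: field_simps)
  finally show ?thesis .
qed

lemma integrable_payoff:
  assumes "0 \<le> s" shows "integrable (unif01 \<Otimes>\<^sub>M others_vals) (payoff s)"
proof -
  interpret P: prob_space "unif01 \<Otimes>\<^sub>M others_vals"
    by (intro prob_space_pair prob_space_uniform_measure prob_space_others_vals) auto
  have "\<bar>payoff s z\<bar> \<le> 1 + s" for z
    using surplus_bounds[of "snd z"] assms by (auto simp: payoff_def)
  then show ?thesis
    by (intro P.integrable_const_bound[where B="1 + s"] AE_I2) auto
qed

lemma integral_payoff:
  assumes "0 \<le> s"
  shows "integral\<^sup>L (unif01 \<Otimes>\<^sub>M others_vals) (payoff s)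
           = (\<integral>w. min 1 (s + others_tip w) * (surplus w - s) \<partial>others_vals)"
    and "integrable others_vals (\<lambda>w. min 1 (s + others_tip w) * (surplus w - s))"
proof -
  interpret U: prob_space unif01
    by (intro prob_space_uniform_measure) auto
  interpret W: prob_space others_vals
    by (rule prob_space_others_vals)
  interpret pair_sigma_finite unif01 others_vals
    by unfold_locales
  have int: "integrable (unif01 \<Otimes>\<^sub>M others_vals) (\<lambda>(v0, w). payoff s (v0, w))"
    using integrable_payoff[OF assms] by simp
  have inner: "(\<integral>v0. payoff s (v0, w) \<partial>unif01) = min 1 (s + others_tip w) * (surplus w - s)" for w
  proof -
    have "(\<lambda>v0. payoff s (v0, w)) = (\<lambda>v0. indicator {..<s + others_tip w} v0 * (surplus w - s))"
      by (auto simp: payoff_def indicator_def)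
    then show ?thesis
      using measure_unif01_lessThan[of "s + others_tip w"] assms others_tip_nonneg[of w] by simp
  qed
  show "integral\<^sup>L (unif01 \<Otimes>\<^sub>M others_vals) (payoff s)
      = (\<integral>w. min 1 (s + others_tip w) * (surplus w - s) \<partial>others_vals)"
    using integral_snd[OF int] inner by simp
  show "integrable others_vals (\<lambda>w. min 1 (s + others_tip w) * (surplus w - s))"
    using integrable_snd[OF int] inner by simp
qed

lemma integrable_quad_payoff: "integrable others_vals (\<lambda>w. (others_tip w + x) * (surplus w - x))"
proof -
  interpret W: prob_space others_vals
    by (rule prob_space_others_vals)
  have "AE w in others_vals. norm ((others_tip w + x) * (surplus w - x)) \<le> (1/2 + \<bar>x\<bar>) * (1 + \<bar>x\<bar>)"
    using AE_others_vals
  proof eventually_elim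
    fix w :: vec assume "\<forall>j\<in>others. w j \<in> {0..1}"
    then have "others_tip w \<le> 1/2"
      by (rule others_tip_le)
    then have "\<bar>others_tip w + x\<bar> \<le> 1/2 + \<bar>x\<bar>"
      using others_tip_nonneg[of w] by (auto simp: abs_le_iff)
    moreover have "\<bar>surplus w - x\<bar> \<le> 1 + \<bar>x\<bar>"
      using surplus_bounds[of w] by (auto simp: abs_le_iff)
    ultimately show "norm ((others_tip w + x) * (surplus w - x)) \<le> (1/2 + \<bar>x\<bar>) * (1 + \<bar>x\<bar>)"
      unfolding real_norm_def abs_mult by (intro mult_mono) auto
  qed
  then show ?thesis
    by (intro W.integrable_const_bound) auto
qed

lemma integrable_others_tip: "integrable others_vals others_tip"
  and integral_others_tip: "integral\<^sup>L others_vals others_tip = integral {0..vl} Fpow"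
proof -
  have "integrable others_vals (\<lambda>w. tip (w j))" "integral\<^sup>L others_vals (\<lambda>w. tip (w j)) = integral\<^sup>L PF tip"
    if "j \<in> others" for j
    using integral_PiM_component[OF that finite_others tip_measurable integrable_tip] by auto
  then show "integrable others_vals others_tip"
    and "integral\<^sup>L others_vals others_tip = integral {0..vl} Fpow"
    unfolding others_tip_def[abs_def] using n_ge_2
    by (auto simp: integral_tip card_others of_nat_diff)
qed

lemma integrable_surplus: "integrable others_vals surplus"
proof -
  interpret W: prob_space others_vals
    by (rule prob_space_others_vals)
  show ?thesis
    using surplus_bounds by (intro W.integrable_const_bound[where B=1] AE_I2) auto
qed

lemma integral_surplus_others: "integral\<^sup>L others_vals surplus = integral {0..v} Fpow"
  unfolding surplus_def[abs_def] Fpow_def[abs_def] using integral_surplus[of others v] v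
  by (simp add: card_others)

lemma quad_payoff_expand:
  "quad_payoff x = (\<integral>w. others_tip w * surplus w \<partial>others_vals)
     + x * (integral {0..v} Fpow - integral {0..vl} Fpow) - x\<^sup>2"
proof -
  interpret W: prob_space others_vals
    by (rule prob_space_others_vals)
  have "(\<lambda>w. (others_tip w + x) * (surplus w - x))
      = (\<lambda>w. others_tip w * surplus w + x * surplus w - x * others_tip w - x\<^sup>2)"
    by (auto simp: algebra_simps power2_eq_square)
  moreover have "integrable others_vals (\<lambda>w. others_tip w * surplus w)"
    using integrable_quad_payoff[of 0] by simp
  ultimately show ?thesis
    unfolding quad_payoff_def using integrable_surplus integrable_others_tip
    by (simp add: integral_surplus_others integral_others_tip W.prob_space algebra_simps)
qed

text \<open>The vertex of the parabola quad_payoff is (E surplus - E others_tip) / 2; by the choice of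
  vl (through integral_tip) this is tip v when v \<ge> vl, and it is nonpositive when v < vl.\<close>
lemma quad_payoff_le:
  assumes "0 \<le> x" shows "quad_payoff x \<le> quad_payoff (tip v)"
proof (cases "vl \<le> v")
  case True
  then have "integral {0..v} Fpow - integral {0..vl} Fpow = 2 * tip v"
    using integral_Fpow_combine[of 0 vl v] vl_pos unfolding tip_eq_integral by simp
  then have "quad_payoff (tip v) - quad_payoff x = (tip v - x)\<^sup>2"
    unfolding quad_payoff_expand by (simp add: algebra_simps power2_eq_square)
  then show ?thesis
    by (metis diff_ge_0_iff_ge zero_le_power2)
next
  case False
  then have "integral {0..v} Fpow - integral {0..vl} Fpow \<le> 0"
    using integral_Fpow_combine[of 0 v vl] integral_Fpow_nonneg[of v vl] v by simp
  then have "x * (integral {0..v} Fpow - integral {0..vl} Fpow) \<le> 0"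
    using assms by (simp add: mult_nonneg_nonpos)
  moreover have "tip v = 0"
    using False by (simp add: tip_eq_0)
  ultimately show ?thesis
    unfolding quad_payoff_expand by (simp add: power2_eq_square) (use zero_le_square[of x] in linarith)
qed

lemma expected_payoff_le:
  assumes "0 \<le> s"
  shows "(\<integral>w. min 1 (s + others_tip w) * (surplus w - s) \<partial>others_vals) \<le> quad_payoff (min s (1/2))"
  unfolding quad_payoff_def
proof (rule integral_mono_AE[OF integral_payoff(2)[OF assms] integrable_quad_payoff])
  show "AE w in others_vals. min 1 (s + others_tip w) * (surplus w - s)
      \<le> (others_tip w + min s (1/2)) * (surplus w - min s (1/2))"
    using AE_others_vals
  proof eventually_elim
    fix w :: vec assume "\<forall>j\<in>others. w j \<in> {0..1}"
    then have "others_tip w \<le> 1/2"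
      by (rule others_tip_le)
    then show "min 1 (s + others_tip w) * (surplus w - s) \<le> (others_tip w + min s (1/2)) * (surplus w - min s (1/2))"
      using capped_payoff_le_quadratic[of "others_tip w" "surplus w" s]
        others_tip_nonneg[of w] surplus_bounds[of w] assms by (simp add: add.commute)
  qed
qed

lemma expected_payoff_truthful:
  "(\<integral>w. min 1 (tip v + others_tip w) * (surplus w - tip v) \<partial>others_vals) = quad_payoff (tip v)"
  unfolding quad_payoff_def
proof (rule integral_cong_AE)
  show "AE w in others_vals. min 1 (tip v + others_tip w) * (surplus w - tip v)
      = (others_tip w + tip v) * (surplus w - tip v)"
    using AE_others_vals
  proof eventually_elim
    fix w :: vec assume "\<forall>j\<in>others. w j \<in> {0..1}"
    then have "tip v + others_tip w \<le> 1"
      using others_tip_le[of w] tip_v_le by simp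
    then show "min 1 (tip v + others_tip w) * (surplus w - tip v) = (others_tip w + tip v) * (surplus w - tip v)"
      by (simp add: add.commute)
  qed
qed simp_all

lemma util_i_deviation:
  fixes w :: vec and s b v0 :: real
  defines "vs \<equiv> w(i := v)"
  defines "\<tau> \<equiv> (tipvec n tip vs)(i := s)"
  shows "util_i n 0 i vs (vs(i := b)) \<tau> (bribe_strategy n nb \<tau> v0) \<le> payoff s (v0, w)"
    and "util_i n 0 i vs vs \<tau> (bribe_strategy n nb \<tau> v0) = payoff s (v0, w)"
proof -
  have tips: "(\<Sum>j\<in>{1..n}. \<tau> j) = s + others_tip w"
    using sum_deviating_tips[OF i] unfolding \<tau>_def vs_def others_tip_def others_def by simp
  have "Max (insert 0 (bd ` ({1..n} - {i}))) = highest others w" if "\<forall>j\<in>others. bd j = w j" for bd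
    using that unfolding highest_def others_def by (metis (no_types, lifting) image_cong)
  then have price: "Max (insert 0 ((vs(i := b)) ` ({1..n} - {i}))) = highest others w"
    "Max (insert 0 (vs ` ({1..n} - {i}))) = highest others w"
    unfolding vs_def others_def by auto
  have at_i: "vs i = v" "\<tau> i = s"
    unfolding vs_def \<tau>_def by simp_all
  show "util_i n 0 i vs (vs(i := b)) \<tau> (bribe_strategy n nb \<tau> v0) \<le> payoff s (v0, w)"
    using util_i_bribe_strategy(1)[OF i, of vs "vs(i := b)" \<tau> nb v0]
    unfolding tips price at_i payoff_def surplus_def by (simp split: if_splits)
  show "util_i n 0 i vs vs \<tau> (bribe_strategy n nb \<tau> v0) = payoff s (v0, w)"
    using util_i_bribe_strategy(2)[OF i, of vs vs \<tau> nb v0] v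
    unfolding tips price at_i payoff_def surplus_def by simp
qed

lemma EU_i_truthful: "EU_i n 0 PF tip (bribe_strategy n nb) i v v (tip v) = quad_payoff (tip v)"
proof -
  have "EU_i n 0 PF tip (bribe_strategy n nb) i v v (tip v)
      = integral\<^sup>L (unif01 \<Otimes>\<^sub>M others_vals) (payoff (tip v))"
    unfolding EU_i_def others_def[symmetric] using util_i_deviation(2)
    by (intro Bochner_Integration.integral_cong) (auto simp: Let_def)
  then show ?thesis
    using integral_payoff(1)[OF tip_nonneg] expected_payoff_truthful by simp
qed

lemma EU_i_le_truthful:
  assumes "0 \<le> s"
  shows "EU_i n 0 PF tip (bribe_strategy n nb) i v b s \<le> EU_i n 0 PF tip (bribe_strategy n nb) i v v (tip v)"
proof -
  define u where "u = (\<lambda>(v0, w). let vs = w(i := v); \<tau> = (tipvec n tip vs)(i := s)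
      in util_i n 0 i vs (vs(i := b)) \<tau> (bribe_strategy n nb \<tau> v0))"
  have EU: "EU_i n 0 PF tip (bribe_strategy n nb) i v b s = integral\<^sup>L (unif01 \<Otimes>\<^sub>M others_vals) u"
    unfolding EU_i_def u_def others_def ..
  have "integral\<^sup>L (unif01 \<Otimes>\<^sub>M others_vals) u \<le> quad_payoff (tip v)"
  proof (cases "integrable (unif01 \<Otimes>\<^sub>M others_vals) u")
    case True
    have "integral\<^sup>L (unif01 \<Otimes>\<^sub>M others_vals) u \<le> integral\<^sup>L (unif01 \<Otimes>\<^sub>M others_vals) (payoff s)"
    proof (intro integral_mono True integrable_payoff assms)
      fix z :: "real \<times> vec"
      obtain v0 w where z: "z = (v0, w)"
        by (cases z)
      show "u z \<le> payoff s z"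
        unfolding z u_def by (simp only: case_prod_conv Let_def) (rule util_i_deviation(1))
    qed
    also have "\<dots> \<le> quad_payoff (min s (1/2))"
      using integral_payoff(1)[OF assms] expected_payoff_le[OF assms] by simp
    also have "\<dots> \<le> quad_payoff (tip v)"
      using assms by (intro quad_payoff_le) simp
    finally show ?thesis .
  next
    case False
    then have "integral\<^sup>L (unif01 \<Otimes>\<^sub>M others_vals) u = 0"
      by (rule not_integrable_integral_eq)
    also have "0 \<le> quad_payoff 0"
      unfolding quad_payoff_def using others_tip_nonneg surplus_bounds
      by (intro integral_nonneg_AE AE_I2) simp
    also have "\<dots> \<le> quad_payoff (tip v)"
      by (intro quad_payoff_le) simp
    finally show ?thesis .
  qed
  then show ?thesis
    unfolding EU EU_i_truthful .
qed

end

section \<open>The equilibrium\<close>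

context tipping_game
begin

lemma equilibrium_bribe_strategy: "equilibrium n 0 PF tip (bribe_strategy n nb)"
  unfolding equilibrium_def
proof (intro conjI ballI exI[of _ belief] allI impI)
  show "0 \<le> tip v" for v
    by (rule tip_nonneg)
  show "consistent_beliefs n PF tip belief"
    by (rule consistent_beliefs_belief)
next
  fix \<tau> :: vec and v0 :: real
  assume tips: "\<forall>j\<in>{1..n}. 0 \<le> \<tau> j" and v0: "v0 \<in> {0..1}"
  show "valid_action0 n (bribe_strategy n nb \<tau> v0)"
    using tips by (rule valid_bribe_strategy)
  show "EU_0 n 0 (belief \<tau>) \<tau> v0 a \<le> EU_0 n 0 (belief \<tau>) \<tau> v0 (bribe_strategy n nb \<tau> v0)"
    if "valid_action0 n a" for a
    using v0 by (intro order_trans[OF EU_0_le_bribe_surplus[OF tips v0 that] EU_0_bribe_strategy]) simp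
  show "if 0 < win_prob_0 n 0 (belief \<tau>) \<tau> v0 (fst (bribe_strategy n nb \<tau> v0))
      then snd (bribe_strategy n nb \<tau> v0) = Some v0 else snd (bribe_strategy n nb \<tau> v0) \<in> {None, Some 0}"
    using win_prob_bribe_strategy[OF v0 tips] by (simp add: bribe_strategy_def)
next
  fix i :: nat and v b s :: real
  assume "i \<in> {1..n}" "v \<in> {0..1}" "0 \<le> s"
  then interpret tipping_bidder PF F n vl i v
    by unfold_locales
  show "EU_i n 0 PF tip (bribe_strategy n nb) i v b s \<le> EU_i n 0 PF tip (bribe_strategy n nb) i v v (tip v)"
    using \<open>0 \<le> s\<close> by (rule EU_i_le_truthful)
qed

end

theorem proposition6:
  fixes n :: nat and f F :: "real \<Rightarrow> real" and vl :: real
    and nb :: "(nat \<Rightarrow> real) \<Rightarrow> real \<Rightarrow> bool"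
  assumes n2: "2 \<le> n"
    and f_meas: "f \<in> borel_measurable borel"
    and f_nonneg: "\<forall>x. 0 \<le> f x"
    and f_supp: "\<forall>x. x \<notin> {0..1} \<longrightarrow> f x = 0"
    and f_prob: "prob_space (density lborel (\<lambda>x. ennreal (f x)))"
    and full_support: "\<forall>x\<in>{0..1}. \<forall>e>0.
          measure (density lborel (\<lambda>x. ennreal (f x))) {x - e<..<x + e} > 0"
    and F_def: "\<forall>x. F x = measure (density lborel (\<lambda>x. ennreal (f x))) {..x}"
    and cond: "\<forall>v\<in>{0..1}. integral {0..v} (\<lambda>\<theta>. F \<theta> ^ (n - 1)) \<le> v / real n"
    and vl_range: "vl \<in> {0..1}"
    and vl_eq: "integral {0..1} (\<lambda>\<theta>. F \<theta> ^ (n - 1)) - integral {vl..1} (\<lambda>\<theta>. F \<theta> ^ n)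
          = (real n + 1) / (real n - 1) * integral {0..vl} (\<lambda>\<theta>. F \<theta> ^ (n - 1))"
    and nb_meas: "(\<lambda>(\<tau>, v0). nb \<tau> v0) \<in> tips_space n \<Otimes>\<^sub>M borel \<rightarrow>\<^sub>M count_space UNIV"
  shows "equilibrium n 0 (density lborel (\<lambda>x. ennreal (f x)))
           (\<lambda>v. if v < vl then 0 else 1 / 2 * integral {vl..v} (\<lambda>\<theta>. F \<theta> ^ (n - 1)))
           (bribe_strategy n nb)
       \<and> (\<forall>\<tau> v0 S p. fst (bribe_strategy n nb \<tau> v0) = Some (S, p) \<longrightarrow> proposer_accepts \<tau> S p)"
proof -
  interpret tipping_game "density lborel (\<lambda>x. ennreal (f x))" F n vl
    using unit_interval_distribution_density[OF f_meas f_supp f_prob full_support F_def] n2 cond vl_range vl_eq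
    by (simp add: tipping_game_def tipping_game_axioms_def)
  have "(\<lambda>v. if v < vl then 0 else 1 / 2 * integral {vl..v} (\<lambda>\<theta>. F \<theta> ^ (n - 1))) = tip"
    by (simp add: fun_eq_iff tip_def Fpow_def[abs_def])
  then show ?thesis
    using equilibrium_bribe_strategy bribe_strategy_accepted by simp
qed

end
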